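(* Let $G=(V,E)$ be a nice graph that is not algebraic $(1,5)$-choosable, such that every nice graph with fewer vertices than $G$ is algebraic $(1,5)$-choosable, and let $J$ be a good subset of $V$ of minimum size among all good subsets. If $e=\{i,i'\}\in E_{J,2}$ and $d_{G_{J,3}}(i)\ge2$, then $i$ has at least two neighbours in $J$ that are not special neighbours of $i$.
   Context: All graphs are finite and simple with vertex set $\{1,\dots,n\}$; $E(i)$ is the set of edges incident to $i$. An edge is isolated if both its ends have degree $1$; a graph is nice if it has no isolated edges. For a graph $H=(V,E)$, $P_H=\prod_{\{i,j\}\in E,\ i<j}(\sum_{e\in E(i)}x_e-\sum_{e\in E(j)}x_e)$ (empty product $=1$); $H$ is algebraic $(1,b)$-choosable if there is $K:E\to\mathbb{N}$ with $\sum_eK(e)=|E|$, $K(e)\le b-1$ for all $e$, and the coefficient of $\prod_ex_e^{K(e)}$ in $P_H$ nonzero. For $J\subseteq V$: $E_{J,2}$ is the set of isolated edges of $G-J$; $E_{J,3}$ the edges with exactly one end in $J$; $E_{J,4}$ the edges with both ends in $J$; $G_{J,3}=(V,E_{J,3})$, $G_{J,4}=(J,E_{J,4})$; $d_{G_{J,3}}(v)$ is the degree of $v$ in $G_{J,3}$. For $i\in V\setminus J$, if $N_{G_{J,3}}(i)=\{j\}$ then $i$ is a private neighbour of $j$; other vertices of $N_{G_{J,3}}(j)$ are non-private neighbours of $j$. For $\{i,j\}\in E_{J,3}$ with $j\in J$: if $j$ has a private neighbour and $i$ is the only non-private neighbour of $j$, then $j$ is a special neighbour of $i$. $J$ is a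 good subset if $J\ne\emptyset$ and: (J1) $G_{J,4}$ has maximum degree at most $1$; (J2) $G_{J,3}$ has no isolated edges; (J3) each $j\in J$ has at most one private neighbour; (J4) for each $e=\{j,j'\}\in E_{J,4}$ there is $i_e\in V\setminus J$ with $\{j,j'\}\subseteq N_{G_{J,3}}(i_e)$, neither $j$ nor $j'$ has a private neighbour, and $i_e\ne i_{e'}$ for distinct $e,e'\in E_{J,4}$; (J5) for every $e\in E_{J,2}$, each end vertex of $e$ has a neighbour in $J$. *)

theory Defs
  imports Main "HOL-Library.Poly_Mapping"
begin

definition simple_graph :: "nat \<Rightarrow> nat set set \<Rightarrow> bool" where
  "simple_graph n E \<longleftrightarrow> (\<forall>e\<in>E. \<exists>i j. e = {i, j} \<and> i \<noteq> j \<and> i \<in> {1..n} \<and> j \<in> {1..n})"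

definition inc :: "nat set set \<Rightarrow> nat \<Rightarrow> nat set set" where
  "inc E i = {e \<in> E. i \<in> e}"

definition deg :: "nat set set \<Rightarrow> nat \<Rightarrow> nat" where
  "deg E i = card (inc E i)"

definition nbrs :: "nat set set \<Rightarrow> nat \<Rightarrow> nat set" where
  "nbrs E i = {j. {i, j} \<in> E}"

definition isolated_edges :: "nat set set \<Rightarrow> nat set set" where
  "isolated_edges E = {e \<in> E. \<forall>v\<in>e. deg E v = 1}"

definition nice :: "nat set set \<Rightarrow> bool" where
  "nice E \<longleftrightarrow> isolated_edges E = {}"

text \<open>Multivariate polynomials in variables x_e (e an edge) with integer coefficients,
  represented via HOL-Library.Poly_Mapping: monomials are finitely supported exponent maps.\<close>

type_synonym mpoly = "(nat set \<Rightarrow>\<^sub>0 nat) \<Rightarrow>\<^sub>0 int"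

definition Var :: "nat set \<Rightarrow> mpoly" where
  "Var e = Poly_Mapping.single (Poly_Mapping.single e 1) 1"

definition graph_poly :: "nat set set \<Rightarrow> mpoly" where
  "graph_poly E = (\<Prod>e\<in>E. (\<Sum>f\<in>inc E (Min e). Var f) - (\<Sum>f\<in>inc E (Max e). Var f))"

definition monomial_exp :: "nat set set \<Rightarrow> (nat set \<Rightarrow> nat) \<Rightarrow> (nat set \<Rightarrow>\<^sub>0 nat)" where
  "monomial_exp E K = (\<Sum>e\<in>E. Poly_Mapping.single e (K e))"

definition alg_1_choosable :: "nat \<Rightarrow> nat set set \<Rightarrow> bool" where
  "alg_1_choosable b E \<longleftrightarrow> (\<exists>K :: nat set \<Rightarrow> nat.
      (\<Sum>e\<in>E. K e) = card E \<and> (\<forall>e\<in>E. K e \<le> b - 1) \<and>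
      Poly_Mapping.lookup (graph_poly E) (monomial_exp E K) \<noteq> 0)"


definition E2 :: "nat set set \<Rightarrow> nat set \<Rightarrow> nat set set" where
  "E2 E J = isolated_edges {e \<in> E. e \<inter> J = {}}"

definition E3 :: "nat set set \<Rightarrow> nat set \<Rightarrow> nat set set" where
  "E3 E J = {e \<in> E. card (e \<inter> J) = 1}"

definition E4 :: "nat set set \<Rightarrow> nat set \<Rightarrow> nat set set" where
  "E4 E J = {e \<in> E. e \<subseteq> J}"

definition private_nbr :: "nat set \<Rightarrow> nat set set \<Rightarrow> nat set \<Rightarrow> nat \<Rightarrow> nat \<Rightarrow> bool" where
  "private_nbr V E J i j \<longleftrightarrow> i \<in> V - J \<and> nbrs (E3 E J) i = {j}"

definition has_private :: "nat set \<Rightarrow> nat set set \<Rightarrow> nat set \<Rightarrow> nat \<Rightarrow> bool" where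
  "has_private V E J j \<longleftrightarrow> (\<exists>i. private_nbr V E J i j)"

definition nonprivate_nbrs :: "nat set \<Rightarrow> nat set set \<Rightarrow> nat set \<Rightarrow> nat \<Rightarrow> nat set" where
  "nonprivate_nbrs V E J j = {i \<in> nbrs (E3 E J) j. \<not> private_nbr V E J i j}"

definition special_nbr :: "nat set \<Rightarrow> nat set set \<Rightarrow> nat set \<Rightarrow> nat \<Rightarrow> nat \<Rightarrow> bool" where
  "special_nbr V E J j i \<longleftrightarrow> {i, j} \<in> E3 E J \<and> j \<in> J \<and>
      has_private V E J j \<and> nonprivate_nbrs V E J j = {i}"
  \<comment> \<open>j is a special neighbour of i\<close>

definition good_subset :: "nat set \<Rightarrow> nat set set \<Rightarrow> nat set \<Rightarrow> bool" where
  "good_subset V E J \<longleftrightarrow> J \<subseteq> V \<and> J \<noteq> {} \<and>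
     (\<forall>v\<in>J. deg (E4 E J) v \<le> 1) \<and>
     nice (E3 E J) \<and>
     (\<forall>j\<in>J. card {i. private_nbr V E J i j} \<le> 1) \<and>
     (\<exists>ie :: nat set \<Rightarrow> nat. inj_on ie (E4 E J) \<and>
        (\<forall>e\<in>E4 E J. ie e \<in> V - J \<and> e \<subseteq> nbrs (E3 E J) (ie e) \<and>
                     (\<forall>j\<in>e. \<not> has_private V E J j))) \<and>
     (\<forall>e\<in>E2 E J. \<forall>v\<in>e. \<exists>j\<in>J. {v, j} \<in> E)"

end

theory Submission
  imports Defs
begin

text \<open>Suppose \<open>i\<close> had at most one non-special neighbour in \<open>J\<close>. Since \<open>i\<close> has at least two
  neighbours in \<open>J\<close>, one of them, \<open>s\<close>, is special; then \<open>N(s) = {i, p}\<close> with \<open>p\<close> the private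
  neighbour of \<open>s\<close>. If \<open>i\<close> had three neighbours in \<open>J\<close>, then \<open>J - {s}\<close> would still be good,
  contradicting minimality, so \<open>N(i) = {s, t, i'}\<close>. Deleting \<open>s, i\<close> (or \<open>s, i, t\<close> when that leaves
  an isolated edge, which forces \<open>t\<close> to have degree two) leaves a smaller nice graph, which is
  algebraic \<open>(1,5)\<close>-choosable. Its nonvanishing coefficient lifts to \<open>P_G\<close>: weighting the deleted
  edges above the remaining ones, the lowest-weight part of each deleted edge's factor is a single
  neighbouring variable, so the lifted coefficient is the old one up to sign.\<close>

section \<open>Weighted degrees of polynomials\<close>

definition wdeg :: "(nat set \<Rightarrow> nat) \<Rightarrow> (nat set \<Rightarrow>\<^sub>0 nat) \<Rightarrow> nat" where
  "wdeg w m = (\<Sum>h\<in>Poly_Mapping.keys m. w h * Poly_Mapping.lookup m h)"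

lemma wdeg_eq_sum_superset:
  "finite S \<Longrightarrow> Poly_Mapping.keys m \<subseteq> S \<Longrightarrow> wdeg w m = (\<Sum>h\<in>S. w h * Poly_Mapping.lookup m h)"
  unfolding wdeg_def by (rule sum.mono_neutral_left) (auto simp: in_keys_iff)

lemma wdeg_add: "wdeg w (m1 + m2) = wdeg w m1 + wdeg w m2"
proof -
  let ?S = "Poly_Mapping.keys m1 \<union> Poly_Mapping.keys m2"
  have f: "finite ?S" by simp
  have "wdeg w (m1 + m2) = (\<Sum>h\<in>?S. w h * Poly_Mapping.lookup (m1+m2) h)"
    by (rule wdeg_eq_sum_superset[OF f]) (simp add: keys_add)
  also have "\<dots> = (\<Sum>h\<in>?S. w h * Poly_Mapping.lookup m1 h) + (\<Sum>h\<in>?S. w h * Poly_Mapping.lookup m2 h)"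
    by (simp add: lookup_add algebra_simps sum.distrib)
  also have "\<dots> = wdeg w m1 + wdeg w m2"
    by (simp add: wdeg_eq_sum_superset[OF f])
  finally show ?thesis .
qed

lemma wdeg_zero [simp]: "wdeg w 0 = 0"
  by (simp add: wdeg_def)

lemma wdeg_single [simp]: "wdeg w (Poly_Mapping.single h k) = w h * k"
  by (cases "k = 0") (simp_all add: wdeg_def)

lemma wdeg_sum: "wdeg w (\<Sum>x\<in>S. f x) = (\<Sum>x\<in>S. wdeg w (f x))"
  by (induction S rule: infinite_finite_induct) (simp_all add: wdeg_add)

definition homog_wdeg :: "(nat set \<Rightarrow> nat) \<Rightarrow> nat \<Rightarrow> mpoly \<Rightarrow> bool" where
  "homog_wdeg w d p \<longleftrightarrow> (\<forall>m\<in>Poly_Mapping.keys p. wdeg w m = d)"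

definition gt_wdeg :: "(nat set \<Rightarrow> nat) \<Rightarrow> nat \<Rightarrow> mpoly \<Rightarrow> bool" where
  "gt_wdeg w d p \<longleftrightarrow> (\<forall>m\<in>Poly_Mapping.keys p. wdeg w m > d)"

definition ge_wdeg :: "(nat set \<Rightarrow> nat) \<Rightarrow> nat \<Rightarrow> mpoly \<Rightarrow> bool" where
  "ge_wdeg w d p \<longleftrightarrow> (\<forall>m\<in>Poly_Mapping.keys p. wdeg w m \<ge> d)"

lemma keys_multE:
  assumes "m \<in> Poly_Mapping.keys (p * q)"
  obtains a b where "a \<in> Poly_Mapping.keys p" "b \<in> Poly_Mapping.keys q" "m = a + b"
  using keys_mult[of p q] assms by blast

lemma homog_wdeg_mult: "homog_wdeg w d1 p \<Longrightarrow> homog_wdeg w d2 q \<Longrightarrow> homog_wdeg w (d1+d2) (p*q)"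
  unfolding homog_wdeg_def by (auto elim!: keys_multE simp: wdeg_add)

lemma gt_wdeg_mult_ge: "gt_wdeg w d1 p \<Longrightarrow> ge_wdeg w d2 q \<Longrightarrow> gt_wdeg w (d1+d2) (p*q)"
  unfolding gt_wdeg_def ge_wdeg_def by (fastforce elim!: keys_multE simp: wdeg_add)

lemma gt_wdeg_mult_homog: "homog_wdeg w d1 p \<Longrightarrow> gt_wdeg w d2 q \<Longrightarrow> gt_wdeg w (d1+d2) (p*q)"
  unfolding gt_wdeg_def homog_wdeg_def by (fastforce elim!: keys_multE simp: wdeg_add)

lemma gt_wdeg_add: "gt_wdeg w d p \<Longrightarrow> gt_wdeg w d q \<Longrightarrow> gt_wdeg w d (p+q)"
  unfolding gt_wdeg_def using keys_add[of p q] by blast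

lemma gt_wdeg_imp_ge_wdeg: "gt_wdeg w d p \<Longrightarrow> ge_wdeg w d p"
  unfolding gt_wdeg_def ge_wdeg_def by auto

lemma homog_wdeg_imp_ge_wdeg: "homog_wdeg w d p \<Longrightarrow> ge_wdeg w d p"
  unfolding homog_wdeg_def ge_wdeg_def by auto

lemma ge_wdeg_add: "ge_wdeg w d p \<Longrightarrow> ge_wdeg w d q \<Longrightarrow> ge_wdeg w d (p+q)"
  unfolding ge_wdeg_def using keys_add[of p q] by blast

lemma homog_wdeg_one: "homog_wdeg w 0 1"
  by (simp add: homog_wdeg_def)

lemma gt_wdeg_zero: "gt_wdeg w d 0"
  by (simp add: gt_wdeg_def)

lemma homog_wdeg_prod_perturbed:
  assumes "finite I"
    and "\<forall>j\<in>I. homog_wdeg w (d j) (a j) \<and> gt_wdeg w (d j) (b j)"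
  shows "homog_wdeg w (\<Sum>j\<in>I. d j) (\<Prod>j\<in>I. a j) \<and>
         gt_wdeg w (\<Sum>j\<in>I. d j) ((\<Prod>j\<in>I. a j + b j) - (\<Prod>j\<in>I. a j))"
  using assms
proof (induction I rule: finite_induct)
  case empty
  then show ?case by (simp add: homog_wdeg_one gt_wdeg_zero)
next
  case (insert x I)
  let ?A = "\<Prod>j\<in>I. a j" and ?B = "\<Prod>j\<in>I. a j + b j"
  from insert have IH: "homog_wdeg w (\<Sum>j\<in>I. d j) ?A" "gt_wdeg w (\<Sum>j\<in>I. d j) (?B - ?A)" by auto
  from insert have hx: "homog_wdeg w (d x) (a x)" "gt_wdeg w (d x) (b x)" by auto
  have "homog_wdeg w (d x + (\<Sum>j\<in>I. d j)) (a x * ?A)" using homog_wdeg_mult[OF hx(1) IH(1)] .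
  moreover
  have eq: "(a x + b x) * ?B - a x * ?A = a x * (?B - ?A) + b x * ?B"
    by (simp add: algebra_simps)
  have g: "ge_wdeg w (\<Sum>j\<in>I. d j) ?B"
  proof -
    have "?B = ?A + (?B - ?A)" by simp
    moreover have "ge_wdeg w (\<Sum>j\<in>I. d j) (?A + (?B - ?A))"
      by (rule ge_wdeg_add[OF homog_wdeg_imp_ge_wdeg[OF IH(1)] gt_wdeg_imp_ge_wdeg[OF IH(2)]])
    ultimately show ?thesis by simp
  qed
  have "gt_wdeg w (d x + (\<Sum>j\<in>I. d j)) (a x * (?B - ?A) + b x * ?B)"
    by (rule gt_wdeg_add[OF gt_wdeg_mult_homog[OF hx(1) IH(2)] gt_wdeg_mult_ge[OF hx(2) g]])
  ultimately show ?case using insert by (simp add: eq)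
qed

lemma lookup_prod_perturbed:
  assumes "finite I"
    and "\<forall>j\<in>I. homog_wdeg w (d j) (a j) \<and> gt_wdeg w (d j) (b j)"
    and "wdeg w t = (\<Sum>j\<in>I. d j)"
  shows "Poly_Mapping.lookup (\<Prod>j\<in>I. a j + b j) t = Poly_Mapping.lookup (\<Prod>j\<in>I. a j) t"
proof -
  have "gt_wdeg w (\<Sum>j\<in>I. d j) ((\<Prod>j\<in>I. a j + b j) - (\<Prod>j\<in>I. a j))"
    using homog_wdeg_prod_perturbed[OF assms(1,2)] by blast
  then have "t \<notin> Poly_Mapping.keys ((\<Prod>j\<in>I. a j + b j) - (\<Prod>j\<in>I. a j))"
    using assms(3) unfolding gt_wdeg_def by auto
  then show ?thesis by (simp add: in_keys_iff lookup_minus)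
qed

lemma lookup_mult_single:
  fixes p :: mpoly
  shows "Poly_Mapping.lookup (p * Poly_Mapping.single k c) (l + k) = Poly_Mapping.lookup p l * c"
proof -
  have "Poly_Mapping.lookup (p * Poly_Mapping.single k c) (l + k)
      = (\<Sum>a. Poly_Mapping.lookup p a * (\<Sum>q. Poly_Mapping.lookup (Poly_Mapping.single k c) q when l + k = a + q))"
    by (simp add: lookup_mult)
  also have "\<dots> = (\<Sum>a. Poly_Mapping.lookup p a * (c when l = a))"
  proof -
    have "(\<Sum>q. Poly_Mapping.lookup (Poly_Mapping.single k c) q when l + k = a + q) = (c when l = a)" for a
    proof -
      have "(\<Sum>q. Poly_Mapping.lookup (Poly_Mapping.single k c) q when l + k = a + q)
          = (\<Sum>q. (c when l + k = a + q) when q = k)"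
        by (rule Sum_any.cong) (auto simp: lookup_single when_def)
      also have "\<dots> = (c when l + k = a + k)" by simp
      also have "\<dots> = (c when l = a)" by (simp add: when_def)
      finally show ?thesis .
    qed
    then show ?thesis by simp
  qed
  also have "\<dots> = (\<Sum>a. Poly_Mapping.lookup p a * c when a = l)"
    by (rule Sum_any.cong) (auto simp: when_def)
  also have "\<dots> = Poly_Mapping.lookup p l * c" by simp
  finally show ?thesis .
qed

section \<open>Lifting a nonvanishing coefficient to a larger graph\<close>

definition edge_factor :: "nat set set \<Rightarrow> nat set \<Rightarrow> mpoly" where
  "edge_factor E e = (\<Sum>f\<in>inc E (Min e). Var f) - (\<Sum>f\<in>inc E (Max e). Var f)"

lemma graph_poly_edge_factor: "graph_poly E = (\<Prod>e\<in>E. edge_factor E e)"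
  by (simp add: graph_poly_def edge_factor_def)

definition linear_in :: "nat set set \<Rightarrow> mpoly \<Rightarrow> bool" where
  "linear_in S p \<longleftrightarrow> (\<forall>m\<in>Poly_Mapping.keys p. \<exists>g\<in>S. m = Poly_Mapping.single g 1)"

lemma keys_Var: "Poly_Mapping.keys (Var g) = {Poly_Mapping.single g 1}"
  by (simp add: Var_def)

lemma linear_in_Var: "g \<in> S \<Longrightarrow> linear_in S (Var g)"
  by (auto simp: linear_in_def keys_Var)

lemma linear_in_add: "linear_in S p \<Longrightarrow> linear_in S q \<Longrightarrow> linear_in S (p + q)"
  unfolding linear_in_def using keys_add[of p q] by blast

lemma linear_in_uminus: "linear_in S p \<Longrightarrow> linear_in S (- p)"
  unfolding linear_in_def by simp

lemma linear_in_diff: "linear_in S p \<Longrightarrow> linear_in S q \<Longrightarrow> linear_in S (p - q)"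
  using linear_in_add[of S p "-q"] linear_in_uminus[of S q] by simp

lemma linear_in_zero: "linear_in S 0"
  by (simp add: linear_in_def)

lemma linear_in_sum: "(\<And>x. x \<in> A \<Longrightarrow> linear_in S (f x)) \<Longrightarrow> linear_in S (sum f A)"
  by (induction A rule: infinite_finite_induct) (auto simp: linear_in_zero linear_in_add)

lemma linear_in_sum_Var: "A \<subseteq> S \<Longrightarrow> linear_in S (\<Sum>g\<in>A. Var g)"
  by (rule linear_in_sum) (auto intro: linear_in_Var)

lemma linear_in_gt_wdeg: "linear_in S p \<Longrightarrow> \<forall>g\<in>S. w g > d \<Longrightarrow> gt_wdeg w d p"
  unfolding linear_in_def gt_wdeg_def by fastforce

lemma linear_in_homog_wdeg: "linear_in S p \<Longrightarrow> \<forall>g\<in>S. w g = d \<Longrightarrow> homog_wdeg w d p"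
  unfolding linear_in_def homog_wdeg_def by fastforce

definition doubletons :: "nat set set \<Rightarrow> bool" where
  "doubletons E \<longleftrightarrow> (\<forall>g\<in>E. \<exists>x y. g = {x,y} \<and> x \<noteq> y)"

lemma doubletons_Min_Max:
  assumes "doubletons E" "e \<in> E"
  shows "Min e \<in> e" "Max e \<in> e" "Min e \<noteq> Max e" "e = {Min e, Max e}"
proof -
  obtain x y where e: "e = {x,y}" "x \<noteq> y" using assms unfolding doubletons_def by blast
  have m: "Min e = min x y" "Max e = max x y" using e by simp_all
  show "Min e \<in> e" "Max e \<in> e" "Min e \<noteq> Max e" "e = {Min e, Max e}"
    unfolding m using e by (auto simp: min_def max_def)
qed

lemma inc_Min_Int_inc_Max:
  assumes "doubletons E" "e \<in> E"
  shows "inc E (Min e) \<inter> inc E (Max e) = {e}"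
proof -
  note mm = doubletons_Min_Max(1-3)[OF assms]
  note me = doubletons_Min_Max(4)[OF assms]
  have *: "g = e" if "g \<in> E" "Min e \<in> g" "Max e \<in> g" for g
  proof -
    have "\<exists>x y. g = {x,y} \<and> x \<noteq> y" using assms(1) that(1) unfolding doubletons_def by (rule bspec)
    then obtain x y where g: "g = {x,y}" "x \<noteq> y" by auto
    have a: "Min e \<in> {x,y}" "Max e \<in> {x,y}" using that(2,3) g(1) by simp_all
    have "g = {Min e, Max e}" unfolding g(1) using a mm(3) g(2) by auto
    then show ?thesis using me[symmetric] by simp
  qed
  then show ?thesis using mm assms(2) by (auto simp: inc_def)
qed

lemma finite_inc: "finite E \<Longrightarrow> finite (inc E v)"
  unfolding inc_def by (rule finite_subset[of _ E]) auto

lemma inc_Min_Un_inc_Max: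
  assumes "doubletons E" "f \<in> E"
  shows "inc E (Min f) \<union> inc E (Max f) = {g \<in> E. g \<inter> f \<noteq> {}}"
proof -
  have f: "f = {Min f, Max f}" by (rule doubletons_Min_Max(4)[OF assms])
  show ?thesis
  proof (rule set_eqI)
    fix g
    show "g \<in> inc E (Min f) \<union> inc E (Max f) \<longleftrightarrow> g \<in> {g \<in> E. g \<inter> f \<noteq> {}}"
      by (subst (2) f) (auto simp: inc_def)
  qed
qed

lemma linear_in_edge_factor_minus_Var:
  assumes "finite E" "doubletons E" "e \<in> E" "h \<in> inc E (Min e) \<union> inc E (Max e) - {e}"
  shows "linear_in (inc E (Min e) \<union> inc E (Max e) - {e, h})
           (edge_factor E e - (if h \<in> inc E (Min e) then Var h else - Var h))"
proof -
  define A where "A = inc E (Min e)"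
  define B where "B = inc E (Max e)"
  have fA: "finite A" and fB: "finite B" using assms(1) by (simp_all add: A_def B_def finite_inc)
  have AB: "A \<inter> B = {e}" using inc_Min_Int_inc_Max[OF assms(2,3)] by (simp add: A_def B_def)
  have h: "h \<in> A \<union> B - {e}" using assms(4) by (simp add: A_def B_def)
  have sA: "(\<Sum>f\<in>A. Var f) = Var e + (\<Sum>f\<in>A-{e}. Var f)"
    using fA AB by (intro sum.remove) auto
  have sB: "(\<Sum>f\<in>B. Var f) = Var e + (\<Sum>f\<in>B-{e}. Var f)"
    using fB AB by (intro sum.remove) auto
  have L: "edge_factor E e = (\<Sum>f\<in>A-{e}. Var f) - (\<Sum>f\<in>B-{e}. Var f)"
    by (simp add: edge_factor_def A_def[symmetric] B_def[symmetric] sA sB)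
  show ?thesis
  proof (cases "h \<in> A")
    case True
    have "(\<Sum>f\<in>A-{e}. Var f) = Var h + (\<Sum>f\<in>A-{e}-{h}. Var f)"
      using fA True h by (simp add: sum.remove)
    then have "edge_factor E e - Var h = (\<Sum>f\<in>A-{e}-{h}. Var f) - (\<Sum>f\<in>B-{e}. Var f)"
      using L by simp
    moreover have "linear_in (A \<union> B - {e, h}) \<dots>"
      by (rule linear_in_diff; rule linear_in_sum_Var) (use AB True in auto)
    ultimately show ?thesis using True by (simp add: A_def B_def)
  next
    case False
    have "(\<Sum>f\<in>B-{e}. Var f) = Var h + (\<Sum>f\<in>B-{e}-{h}. Var f)"
      using fB False h by (simp add: sum.remove)
    then have "edge_factor E e + Var h = (\<Sum>f\<in>A-{e}. Var f) - (\<Sum>f\<in>B-{e}-{h}. Var f)"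
      using L by simp
    moreover have "linear_in (A \<union> B - {e, h}) \<dots>"
      by (rule linear_in_diff; rule linear_in_sum_Var) (use False in auto)
    ultimately show ?thesis using False by (simp add: A_def B_def)
  qed
qed

lemma sum_Var_inc_split:
  assumes "finite E" "E' \<subseteq> E"
  shows "(\<Sum>f\<in>inc E v. Var f) = (\<Sum>f\<in>inc E' v. Var f) + (\<Sum>f\<in>inc E v - E'. Var f)"
proof -
  have "inc E v = inc E' v \<union> (inc E v - E')" using assms by (auto simp: inc_def)
  moreover have "inc E' v \<inter> (inc E v - E') = {}" by (auto simp: inc_def)
  moreover have "finite (inc E' v)" "finite (inc E v - E')"
    using assms by (simp_all add: finite_inc finite_subset)
  ultimately show ?thesis
    using sum.union_disjoint[of "inc E' v" "inc E v - E'" Var] by simp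
qed

lemma linear_in_edge_factor_minus_subgraph:
  assumes "finite E" "E' \<subseteq> E"
  shows "linear_in (inc E (Min e) \<union> inc E (Max e) - E') (edge_factor E e - edge_factor E' e)"
proof -
  have "edge_factor E e - edge_factor E' e =
          (\<Sum>f\<in>inc E (Min e) - E'. Var f) - (\<Sum>f\<in>inc E (Max e) - E'. Var f)"
    unfolding edge_factor_def using sum_Var_inc_split[OF assms] by (simp add: algebra_simps)
  also have "linear_in (inc E (Min e) \<union> inc E (Max e) - E') \<dots>"
    by (rule linear_in_diff; rule linear_in_sum_Var) auto
  finally show ?thesis .
qed

lemma linear_in_edge_factor: "linear_in E (edge_factor E e)"
  unfolding edge_factor_def by (rule linear_in_diff; rule linear_in_sum_Var) (auto simp: inc_def)

lemma prod_single:
  "(\<Prod>f\<in>F. Poly_Mapping.single (k f) (c f) :: mpoly) =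
     Poly_Mapping.single (\<Sum>f\<in>F. k f) (\<Prod>f\<in>F. c f)"
  by (induction F rule: infinite_finite_induct) (simp_all add: mult_single)

lemma edge_factor_leading_in_subgraph:
  assumes "finite E" "doubletons E" "E' \<subseteq> E" "e \<in> E'"
    and "\<forall>g\<in>E'. w g = W" and "\<forall>g\<in>E - E'. g \<inter> e \<noteq> {} \<longrightarrow> w g > W"
  shows "homog_wdeg w W (edge_factor E' e) \<and> gt_wdeg w W (edge_factor E e - edge_factor E' e)"
proof
  show "homog_wdeg w W (edge_factor E' e)"
    by (rule linear_in_homog_wdeg[OF linear_in_edge_factor]) (use assms(5) in auto)
  have "e \<in> E" using assms(3,4) by blast
  then show "gt_wdeg w W (edge_factor E e - edge_factor E' e)"
    using linear_in_gt_wdeg[OF linear_in_edge_factor_minus_subgraph[OF assms(1,3)]]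
      inc_Min_Un_inc_Max[OF assms(2)] assms(6) by (auto simp: Int_commute)
qed

lemma edge_factor_leading_Var:
  assumes "finite E" "doubletons E" "e \<in> E" "h \<in> E" "h \<inter> e \<noteq> {}" "h \<noteq> e"
    and "\<forall>g\<in>E. g \<inter> e \<noteq> {} \<longrightarrow> g \<noteq> e \<longrightarrow> g \<noteq> h \<longrightarrow> w g > w h"
  shows "gt_wdeg w (w h) (edge_factor E e - (if h \<in> inc E (Min e) then Var h else - Var h))"
proof -
  note meet = inc_Min_Un_inc_Max[OF assms(2,3)]
  have "h \<in> inc E (Min e) \<union> inc E (Max e) - {e}" using meet assms(4-6) by blast
  from linear_in_edge_factor_minus_Var[OF assms(1-3) this]
  show ?thesis by (rule linear_in_gt_wdeg) (use meet assms(7) in auto)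
qed

text \<open>The weights make the product of the chosen leading terms the unique contribution of lowest
  weighted degree: each edge of \<open>E - F\<close> contributes its factor in the subgraph \<open>E - F\<close>, and each
  edge \<open>f \<in> F\<close> contributes only the variable of its lightest neighbouring edge \<open>h f\<close>.\<close>

lemma lookup_graph_poly_extend:
  assumes "finite E" "doubletons E" "F \<subseteq> E"
    and W: "\<forall>g\<in>E - F. w g = W"
    and W_lt: "\<forall>e\<in>E - F. \<forall>g\<in>F. g \<inter> e \<noteq> {} \<longrightarrow> w g > W"
    and h: "\<forall>f\<in>F. h f \<in> E \<and> h f \<inter> f \<noteq> {} \<and> h f \<noteq> f"
    and h_lightest: "\<forall>f\<in>F. \<forall>g\<in>E. g \<inter> f \<noteq> {} \<longrightarrow> g \<noteq> f \<longrightarrow> g \<noteq> h f \<longrightarrow> w g > w (h f)"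
    and \<mu>: "wdeg w \<mu> = W * card (E - F)"
    and nz: "Poly_Mapping.lookup (graph_poly (E - F)) \<mu> \<noteq> 0"
  shows "Poly_Mapping.lookup (graph_poly E) (\<mu> + (\<Sum>f\<in>F. Poly_Mapping.single (h f) 1)) \<noteq> 0"
proof -
  define sg where "sg f = (if h f \<in> inc E (Min f) then 1 else -1 :: int)" for f
  define a where "a e = (if e \<in> F then Poly_Mapping.single (Poly_Mapping.single (h e) 1) (sg e)
                         else edge_factor (E - F) e)" for e
  define d where "d e = (if e \<in> F then w (h e) else W)" for e
  define \<kappa> where "\<kappa> = (\<Sum>f\<in>F. Poly_Mapping.single (h f) (1::nat))"
  have sub: "E - F \<subseteq> E" by blast
  have leading: "homog_wdeg w (d e) (a e) \<and> gt_wdeg w (d e) (edge_factor E e - a e)" if "e \<in> E" for e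
  proof (cases "e \<in> F")
    case True
    have "a e = (if h e \<in> inc E (Min e) then Var (h e) else - Var (h e))"
      using True by (simp add: a_def sg_def Var_def single_uminus)
    moreover have "homog_wdeg w (w (h e)) (a e)"
      using True by (auto simp: homog_wdeg_def a_def sg_def)
    ultimately show ?thesis
      using True edge_factor_leading_Var[OF assms(1,2) that] h h_lightest by (simp add: d_def)
  next
    case False
    then show ?thesis
      using edge_factor_leading_in_subgraph[OF assms(1,2) sub, of e w W] that W W_lt
      by (auto simp: a_def d_def Int_commute)
  qed
  have "wdeg w (\<mu> + \<kappa>) = W * card (E - F) + (\<Sum>f\<in>F. w (h f))"
    by (simp add: wdeg_add \<kappa>_def wdeg_sum \<mu>)
  also have "\<dots> = (\<Sum>e\<in>E. d e)"
    using sum.subset_diff[OF assms(3,1), of d] by (simp add: d_def)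
  finally have "Poly_Mapping.lookup (\<Prod>e\<in>E. a e + (edge_factor E e - a e)) (\<mu> + \<kappa>) =
                Poly_Mapping.lookup (\<Prod>e\<in>E. a e) (\<mu> + \<kappa>)"
    by (intro lookup_prod_perturbed[OF assms(1)]) (use leading in auto)
  then have "Poly_Mapping.lookup (graph_poly E) (\<mu> + \<kappa>) = Poly_Mapping.lookup (\<Prod>e\<in>E. a e) (\<mu> + \<kappa>)"
    by (simp add: graph_poly_edge_factor)
  also have "(\<Prod>e\<in>E. a e) = graph_poly (E - F) * Poly_Mapping.single \<kappa> (\<Prod>f\<in>F. sg f)"
    using prod.subset_diff[OF assms(3,1), of a]
    by (simp add: a_def graph_poly_edge_factor prod_single \<kappa>_def mult.commute)
  also have "Poly_Mapping.lookup \<dots> (\<mu> + \<kappa>) = Poly_Mapping.lookup (graph_poly (E - F)) \<mu> * (\<Prod>f\<in>F. sg f)"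
    by (rule lookup_mult_single)
  moreover have "(\<Prod>f\<in>F. sg f) \<noteq> 0"
    using finite_subset[OF assms(3,1)] by (simp add: sg_def)
  ultimately show ?thesis
    using nz by (simp add: \<kappa>_def)
qed

lemma wdeg_monomial_exp: "wdeg w (monomial_exp E K) = (\<Sum>e\<in>E. w e * K e)"
  by (simp add: monomial_exp_def wdeg_sum)

lemma monomial_exp_split:
  assumes "finite E" "F \<subseteq> E"
  shows "monomial_exp E (\<lambda>e. if e \<in> F then K e else K' e) =
           monomial_exp (E - F) K' + (\<Sum>f\<in>F. Poly_Mapping.single f (K f))"
proof -
  have "monomial_exp E (\<lambda>e. if e \<in> F then K e else K' e) =
          (\<Sum>e\<in>E - F. Poly_Mapping.single e (if e \<in> F then K e else K' e)) +
          (\<Sum>e\<in>F. Poly_Mapping.single e (if e \<in> F then K e else K' e))"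
    unfolding monomial_exp_def by (rule sum.subset_diff[OF assms(2,1)])
  then show ?thesis unfolding monomial_exp_def by simp
qed

lemma single_numeral_eq_sum:
  "Poly_Mapping.single k (3::nat) = Poly_Mapping.single k 1 + Poly_Mapping.single k 1 + Poly_Mapping.single k 1"
  "Poly_Mapping.single k (2::nat) = Poly_Mapping.single k 1 + Poly_Mapping.single k 1"
  by (simp_all add: single_add[symmetric] numeral_3_eq_3 numeral_2_eq_2)

lemma alg_1_choosable_extend:
  fixes w :: "nat set \<Rightarrow> nat"
  assumes "finite E" "doubletons E" "F \<subseteq> E"
    and choosable: "alg_1_choosable b (E - F)"
    and W: "\<forall>g\<in>E - F. w g = W"
    and W_lt: "\<forall>e\<in>E - F. \<forall>g\<in>F. g \<inter> e \<noteq> {} \<longrightarrow> w g > W"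
    and h: "\<forall>f\<in>F. h f \<in> E \<and> h f \<inter> f \<noteq> {} \<and> h f \<noteq> f"
    and h_lightest: "\<forall>f\<in>F. \<forall>g\<in>E. g \<inter> f \<noteq> {} \<longrightarrow> g \<noteq> f \<longrightarrow> g \<noteq> h f \<longrightarrow> w g > w (h f)"
    and K_h: "(\<Sum>f\<in>F. Poly_Mapping.single f (K f)) = (\<Sum>f\<in>F. Poly_Mapping.single (h f) (1::nat))"
    and K_le: "\<forall>f\<in>F. K f \<le> b - 1" and K_sum: "(\<Sum>f\<in>F. K f) = card F"
  shows "alg_1_choosable b E"
proof -
  obtain K' where K': "(\<Sum>e\<in>E - F. K' e) = card (E - F)" "\<forall>e\<in>E - F. K' e \<le> b - 1"
    "Poly_Mapping.lookup (graph_poly (E - F)) (monomial_exp (E - F) K') \<noteq> 0"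
    using choosable unfolding alg_1_choosable_def by blast
  define K'' where "K'' = (\<lambda>e. if e \<in> F then K e else K' e)"
  have "wdeg w (monomial_exp (E - F) K') = W * card (E - F)"
    by (simp add: wdeg_monomial_exp W K'(1)[symmetric] sum_distrib_left)
  from lookup_graph_poly_extend[OF assms(1-3) W W_lt h h_lightest this K'(3)]
  have "Poly_Mapping.lookup (graph_poly E) (monomial_exp E K'') \<noteq> 0"
    unfolding K''_def monomial_exp_split[OF assms(1,3)] K_h .
  moreover have "(\<Sum>e\<in>E. K'' e) = card E"
  proof -
    have "(\<Sum>e\<in>E. K'' e) = (\<Sum>e\<in>E - F. K'' e) + (\<Sum>e\<in>F. K'' e)"
      by (rule sum.subset_diff[OF assms(3,1)])
    also have "\<dots> = (\<Sum>e\<in>E - F. K' e) + (\<Sum>e\<in>F. K e)"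
      by (auto simp: K''_def intro!: arg_cong2[where f = "(+)"] sum.cong)
    also have "\<dots> = card E"
      using K'(1) K_sum card_Diff_subset[OF finite_subset[OF assms(3,1)] assms(3)]
        card_mono[OF assms(1,3)] by simp
    finally show ?thesis .
  qed
  moreover have "\<forall>e\<in>E. K'' e \<le> b - 1" using K_le K'(2) by (simp add: K''_def)
  ultimately show ?thesis unfolding alg_1_choosable_def by blast
qed

section \<open>Relabelling the vertices\<close>

definition monom_rename :: "(nat set \<Rightarrow> nat set) \<Rightarrow> (nat set \<Rightarrow>\<^sub>0 nat) \<Rightarrow> (nat set \<Rightarrow>\<^sub>0 nat)" where
  "monom_rename g m = (\<Sum>h\<in>Poly_Mapping.keys m. Poly_Mapping.single (g h) (Poly_Mapping.lookup m h))"

lemma monom_rename_eq_sum_superset: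
  "finite S \<Longrightarrow> Poly_Mapping.keys m \<subseteq> S \<Longrightarrow> monom_rename g m = (\<Sum>h\<in>S. Poly_Mapping.single (g h) (Poly_Mapping.lookup m h))"
  unfolding monom_rename_def by (rule sum.mono_neutral_left) (auto simp: in_keys_iff)

lemma monom_rename_add: "monom_rename g (m1 + m2) = monom_rename g m1 + monom_rename g m2"
proof -
  let ?S = "Poly_Mapping.keys m1 \<union> Poly_Mapping.keys m2"
  have f: "finite ?S" by simp
  have "monom_rename g (m1 + m2) = (\<Sum>h\<in>?S. Poly_Mapping.single (g h) (Poly_Mapping.lookup (m1+m2) h))"
    by (rule monom_rename_eq_sum_superset[OF f]) (simp add: keys_add)
  also have "\<dots> = (\<Sum>h\<in>?S. Poly_Mapping.single (g h) (Poly_Mapping.lookup m1 h)) +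
                  (\<Sum>h\<in>?S. Poly_Mapping.single (g h) (Poly_Mapping.lookup m2 h))"
    by (simp add: lookup_add single_add sum.distrib)
  also have "\<dots> = monom_rename g m1 + monom_rename g m2"
    by (simp add: monom_rename_eq_sum_superset[OF f])
  finally show ?thesis .
qed

lemma monom_rename_zero [simp]: "monom_rename g 0 = 0"
  by (simp add: monom_rename_def)

lemma monom_rename_single [simp]: "monom_rename g (Poly_Mapping.single h k) = Poly_Mapping.single (g h) k"
  by (cases "k = 0") (simp_all add: monom_rename_def)

lemma monom_rename_sum: "monom_rename g (\<Sum>x\<in>A. f x) = (\<Sum>x\<in>A. monom_rename g (f x))"
  by (induction A rule: infinite_finite_induct) (simp_all add: monom_rename_add)

lemma lookup_monom_rename:
  assumes "inj_on g S" "Poly_Mapping.keys m \<subseteq> S" "h \<in> S"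
  shows "Poly_Mapping.lookup (monom_rename g m) (g h) = Poly_Mapping.lookup m h"
proof -
  have "Poly_Mapping.lookup (monom_rename g m) (g h) =
        (\<Sum>h'\<in>Poly_Mapping.keys m. Poly_Mapping.lookup (Poly_Mapping.single (g h') (Poly_Mapping.lookup m h')) (g h))"
    by (simp add: monom_rename_def lookup_sum)
  also have "\<dots> = (\<Sum>h'\<in>Poly_Mapping.keys m. if h' = h then Poly_Mapping.lookup m h else 0)"
  proof (rule sum.cong[OF refl])
    fix h' assume "h' \<in> Poly_Mapping.keys m"
    then have "h' \<in> S" using assms by auto
    then have "g h' = g h \<longleftrightarrow> h' = h" using assms(1,3) by (auto dest: inj_onD)
    then show "Poly_Mapping.lookup (Poly_Mapping.single (g h') (Poly_Mapping.lookup m h')) (g h) =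
               (if h' = h then Poly_Mapping.lookup m h else 0)"
      by (auto simp: lookup_single when_def)
  qed
  also have "\<dots> = Poly_Mapping.lookup m h"
    by (auto simp: in_keys_iff)
  finally show ?thesis .
qed

lemma monom_rename_inj:
  assumes "inj_on g S" "Poly_Mapping.keys m1 \<subseteq> S" "Poly_Mapping.keys m2 \<subseteq> S" "monom_rename g m1 = monom_rename g m2"
  shows "m1 = m2"
proof (rule poly_mapping_eqI)
  fix h
  show "Poly_Mapping.lookup m1 h = Poly_Mapping.lookup m2 h"
  proof (cases "h \<in> S")
    case True
    then show ?thesis using lookup_monom_rename[OF assms(1,2) True] lookup_monom_rename[OF assms(1,3) True] assms(4) by simp
  next
    case False
    then show ?thesis using assms(2,3) by (metis in_mono not_in_keys_iff_lookup_eq_zero)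
  qed
qed

definition poly_rename :: "(nat set \<Rightarrow> nat set) \<Rightarrow> mpoly \<Rightarrow> mpoly" where
  "poly_rename g p = frag_extend (\<lambda>m. frag_of (monom_rename g m)) p"

lemma poly_rename_diff: "poly_rename g (p - q) = poly_rename g p - poly_rename g q"
  by (simp add: poly_rename_def frag_extend_diff)

lemma poly_rename_sum: "finite A \<Longrightarrow> poly_rename g (\<Sum>x\<in>A. f x) = (\<Sum>x\<in>A. poly_rename g (f x))"
  by (simp add: poly_rename_def frag_extend_sum o_def)

lemma poly_rename_frag_of: "poly_rename g (frag_of m) = frag_of (monom_rename g m)"
  by (simp add: poly_rename_def)

lemma poly_rename_zero: "poly_rename g 0 = 0"
  by (simp add: poly_rename_def)

lemma poly_rename_Var: "poly_rename g (Var e) = Var (g e)"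
  unfolding Var_def by (simp add: poly_rename_frag_of)

lemma poly_rename_one: "poly_rename g 1 = 1"
proof -
  have "(1::mpoly) = frag_of 0" by simp
  then show ?thesis by (metis poly_rename_frag_of monom_rename_zero)
qed

lemma poly_rename_mult: "poly_rename g (p * q) = poly_rename g p * poly_rename g q"
proof -
  have "\<forall>q. poly_rename g (p * q) = poly_rename g p * poly_rename g q"
    using subset_UNIV[of "Poly_Mapping.keys p"]
  proof (induction p rule: frag_induction)
    case zero
    then show ?case by (simp add: poly_rename_zero)
  next
    case (one x)
    show ?case
    proof
      fix q :: mpoly
      show "poly_rename g (frag_of x * q) = poly_rename g (frag_of x) * poly_rename g q"
        using subset_UNIV[of "Poly_Mapping.keys q"]
      proof (induction q rule: frag_induction)
        case zero
        then show ?case by (simp add: poly_rename_zero)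
      next
        case (one y)
        then show ?case by (simp add: mult_single poly_rename_frag_of monom_rename_add)
      next
        case (diff a b)
        then show ?case by (simp add: right_diff_distrib poly_rename_diff)
      qed
    qed
  next
    case (diff a b)
    then show ?case by (simp add: left_diff_distrib poly_rename_diff)
  qed
  then show ?thesis by blast
qed

lemma poly_rename_prod: "poly_rename g (\<Prod>x\<in>A. f x) = (\<Prod>x\<in>A. poly_rename g (f x))"
  by (induction A rule: infinite_finite_induct) (simp_all add: poly_rename_one poly_rename_mult)

lemma lookup_poly_rename:
  assumes "inj_on g S" "\<forall>m\<in>Poly_Mapping.keys p. Poly_Mapping.keys m \<subseteq> S" "Poly_Mapping.keys \<mu> \<subseteq> S"
  shows "Poly_Mapping.lookup (poly_rename g p) (monom_rename g \<mu>) = Poly_Mapping.lookup p \<mu>"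
proof -
  have "Poly_Mapping.lookup (poly_rename g p) (monom_rename g \<mu>) =
     (\<Sum>m\<in>Poly_Mapping.keys p. Poly_Mapping.lookup p m * Poly_Mapping.lookup (frag_of (monom_rename g m)) (monom_rename g \<mu>))"
    by (simp add: poly_rename_def frag_extend_def lookup_sum)
  also have "\<dots> = (\<Sum>m\<in>Poly_Mapping.keys p. if m = \<mu> then Poly_Mapping.lookup p m else 0)"
  proof (rule sum.cong[OF refl])
    fix m assume m: "m \<in> Poly_Mapping.keys p"
    have "monom_rename g m = monom_rename g \<mu> \<longleftrightarrow> m = \<mu>"
      using monom_rename_inj[OF assms(1) _ assms(3)] assms(2) m by blast
    then show "Poly_Mapping.lookup p m * Poly_Mapping.lookup (frag_of (monom_rename g m)) (monom_rename g \<mu>) =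
               (if m = \<mu> then Poly_Mapping.lookup p m else 0)"
      by (auto simp: lookup_single when_def)
  qed
  also have "\<dots> = Poly_Mapping.lookup p \<mu>" by (auto simp: in_keys_iff)
  finally show ?thesis .
qed

definition vars_in :: "nat set set \<Rightarrow> mpoly \<Rightarrow> bool" where
  "vars_in S p \<longleftrightarrow> (\<forall>m\<in>Poly_Mapping.keys p. Poly_Mapping.keys m \<subseteq> S)"

lemma vars_in_add: "vars_in S p \<Longrightarrow> vars_in S q \<Longrightarrow> vars_in S (p + q)"
  unfolding vars_in_def using keys_add[of p q] by blast

lemma vars_in_uminus: "vars_in S p \<Longrightarrow> vars_in S (- p)"
  unfolding vars_in_def by simp

lemma vars_in_diff: "vars_in S p \<Longrightarrow> vars_in S q \<Longrightarrow> vars_in S (p - q)"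
  using vars_in_add[of S p "-q"] vars_in_uminus[of S q] by simp

lemma vars_in_mult: "vars_in S p \<Longrightarrow> vars_in S q \<Longrightarrow> vars_in S (p * q)"
  unfolding vars_in_def
  by (auto elim!: keys_multE dest!: subsetD[OF keys_add])

lemma vars_in_one: "vars_in S 1"
  by (simp add: vars_in_def)

lemma vars_in_zero: "vars_in S 0"
  by (simp add: vars_in_def)

lemma vars_in_sum: "(\<And>x. x \<in> A \<Longrightarrow> vars_in S (f x)) \<Longrightarrow> vars_in S (sum f A)"
  by (induction A rule: infinite_finite_induct) (auto simp: vars_in_zero vars_in_add)

lemma vars_in_prod: "(\<And>x. x \<in> A \<Longrightarrow> vars_in S (f x)) \<Longrightarrow> vars_in S (prod f A)"
  by (induction A rule: infinite_finite_induct) (auto simp: vars_in_one vars_in_mult)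

lemma vars_in_Var: "e \<in> S \<Longrightarrow> vars_in S (Var e)"
  by (simp add: vars_in_def keys_Var)

lemma vars_in_graph_poly: "vars_in E (graph_poly E)"
  unfolding graph_poly_edge_factor edge_factor_def
  by (intro vars_in_prod vars_in_diff vars_in_sum vars_in_Var) (auto simp: inc_def)

lemma keys_monomial_exp: "Poly_Mapping.keys (monomial_exp E K) \<subseteq> E"
  unfolding monomial_exp_def
  using keys_sum[of "\<lambda>e. Poly_Mapping.single e (K e)" E] by auto

definition edges_within :: "nat set \<Rightarrow> nat set set \<Rightarrow> bool" where
  "edges_within V E \<longleftrightarrow> (\<forall>e\<in>E. \<exists>x y. e = {x,y} \<and> x \<noteq> y \<and> x \<in> V \<and> y \<in> V)"

lemma edges_within_subset: "edges_within V E \<Longrightarrow> e \<in> E \<Longrightarrow> e \<subseteq> V"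
  unfolding edges_within_def by auto

lemma Min_Max_image_strict_mono:
  fixes f :: "nat \<Rightarrow> 'a::linorder"
  assumes "strict_mono_on V f" "edges_within V E" "e \<in> E"
  shows "Min (f ` e) = f (Min e)" "Max (f ` e) = f (Max e)"
proof -
  obtain x y where e: "e = {x,y}" "x \<noteq> y" "x \<in> V" "y \<in> V"
    using assms(2,3) unfolding edges_within_def by blast
  have "Min (f ` e) = f (Min e) \<and> Max (f ` e) = f (Max e)"
  proof (cases "x < y")
    case True
    then have "f x < f y" using strict_mono_onD[OF assms(1)] e(3,4) by blast
    then show ?thesis using True e(1) by (auto simp: min_def max_def)
  next
    case False
    then have "y < x" using e(2) by simp
    then have "f y < f x" using strict_mono_onD[OF assms(1)] e(3,4) by blast
    then show ?thesis using \<open>y < x\<close> e(1) by (auto simp: min_def max_def)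
  qed
  then show "Min (f ` e) = f (Min e)" "Max (f ` e) = f (Max e)" by simp_all
qed

lemma inj_on_image_edges:
  assumes "inj_on f V" "edges_within V E"
  shows "inj_on (\<lambda>e. f ` e) E"
proof (rule inj_onI)
  fix a b assume "a \<in> E" "b \<in> E" "f ` a = f ` b"
  then show "a = b" using inj_on_image_eq_iff[OF assms(1) edges_within_subset[OF assms(2) \<open>a \<in> E\<close>]
      edges_within_subset[OF assms(2) \<open>b \<in> E\<close>]] by simp
qed

lemma inc_image:
  assumes "inj_on f V" "edges_within V E" "v \<in> V"
  shows "inc ((\<lambda>e. f ` e) ` E) (f v) = (\<lambda>e. f ` e) ` inc E v"
proof
  show "inc ((\<lambda>e. f ` e) ` E) (f v) \<subseteq> (\<lambda>e. f ` e) ` inc E v"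
  proof
    fix e'' assume "e'' \<in> inc ((\<lambda>e. f ` e) ` E) (f v)"
    then obtain e where e: "e \<in> E" "e'' = f ` e" "f v \<in> f ` e" by (auto simp: inc_def)
    have "e \<subseteq> V" using edges_within_subset[OF assms(2) e(1)] .
    then have "v \<in> e" using e(3) assms(1,3) by (auto dest: inj_onD)
    then show "e'' \<in> (\<lambda>e. f ` e) ` inc E v" using e by (auto simp: inc_def)
  qed
next
  show "(\<lambda>e. f ` e) ` inc E v \<subseteq> inc ((\<lambda>e. f ` e) ` E) (f v)"
    by (auto simp: inc_def)
qed

lemma poly_rename_sum_Var_inc:
  assumes "inj_on f V" "edges_within V E" "v \<in> V" "finite E"
  shows "poly_rename (\<lambda>e. f ` e) (\<Sum>h\<in>inc E v. Var h) = (\<Sum>h\<in>inc ((\<lambda>e. f ` e) ` E) (f v). Var h)"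
proof -
  have sub: "inc E v \<subseteq> E" by (auto simp: inc_def)
  have inj: "inj_on (\<lambda>e. f ` e) (inc E v)"
    using inj_on_subset[OF inj_on_image_edges[OF assms(1,2)] sub] .
  have fi: "finite (inc E v)" using finite_inc[OF assms(4)] .
  have "poly_rename (\<lambda>e. f ` e) (\<Sum>h\<in>inc E v. Var h) = (\<Sum>h\<in>inc E v. poly_rename (\<lambda>e. f ` e) (Var h))"
    by (rule poly_rename_sum[OF fi])
  also have "\<dots> = (\<Sum>h\<in>inc E v. Var (f ` h))"
    by (rule sum.cong[OF refl]) (rule poly_rename_Var)
  also have "\<dots> = (\<Sum>h\<in>(\<lambda>e. f ` e) ` inc E v. Var h)"
    using sum.reindex[OF inj, of Var] by (simp only: comp_def)
  also have "\<dots> = (\<Sum>h\<in>inc ((\<lambda>e. f ` e) ` E) (f v). Var h)"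
  proof -
    have xx: "inc ((\<lambda>e. f ` e) ` E) (f v) = (\<lambda>e. f ` e) ` inc E v" by (rule inc_image[OF assms(1-3)])
    show ?thesis unfolding xx by (rule refl)
  qed
  finally show ?thesis .
qed

lemma poly_rename_graph_poly:
  assumes "strict_mono_on V f" "edges_within V E" "finite E"
  shows "poly_rename (\<lambda>e. f ` e) (graph_poly E) = graph_poly ((\<lambda>e. f ` e) ` E)"
proof -
  have inj: "inj_on f V" using strict_mono_on_imp_inj_on[OF assms(1)] .
  have MV: "Min e \<in> V" "Max e \<in> V" if "e \<in> E" for e
  proof -
    have "e \<noteq> {}" "finite e" "e \<subseteq> V" using assms(2) that unfolding edges_within_def by auto
    then show "Min e \<in> V" "Max e \<in> V" using Min_in Max_in by blast+
  qed
  have "poly_rename (\<lambda>e. f ` e) (graph_poly E) = (\<Prod>e\<in>E. poly_rename (\<lambda>e. f ` e) (edge_factor E e))"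
    by (simp add: graph_poly_edge_factor poly_rename_prod)
  also have "\<dots> = (\<Prod>e\<in>E. edge_factor ((\<lambda>e. f ` e) ` E) (f ` e))"
  proof (rule prod.cong[OF refl])
    fix e assume e: "e \<in> E"
    have a: "poly_rename (\<lambda>e. f ` e) (\<Sum>h\<in>inc E (Min e). Var h) = (\<Sum>h\<in>inc ((\<lambda>e. f ` e) ` E) (f (Min e)). Var h)"
      by (rule poly_rename_sum_Var_inc[OF inj assms(2) MV(1)[OF e] assms(3)])
    have b: "poly_rename (\<lambda>e. f ` e) (\<Sum>h\<in>inc E (Max e). Var h) = (\<Sum>h\<in>inc ((\<lambda>e. f ` e) ` E) (f (Max e)). Var h)"
      by (rule poly_rename_sum_Var_inc[OF inj assms(2) MV(2)[OF e] assms(3)])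
    have c: "Min (f ` e) = f (Min e)" "Max (f ` e) = f (Max e)"
      by (rule Min_Max_image_strict_mono[OF assms(1,2) e])+
    show "poly_rename (\<lambda>e. f ` e) (edge_factor E e) = edge_factor ((\<lambda>e. f ` e) ` E) (f ` e)"
      unfolding edge_factor_def poly_rename_diff a b c by (rule refl)
  qed
  also have "\<dots> = (\<Prod>e\<in>(\<lambda>e. f ` e) ` E. edge_factor ((\<lambda>e. f ` e) ` E) e)"
    using prod.reindex[OF inj_on_image_edges[OF inj assms(2)], of "edge_factor ((\<lambda>e. f ` e) ` E)"] by (simp only: comp_def)
  finally show ?thesis by (simp only: graph_poly_edge_factor)
qed

lemma alg_1_choosable_relabel:
  assumes "strict_mono_on V f" "edges_within V E" "finite E"
    and "alg_1_choosable b ((\<lambda>e. f ` e) ` E)"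
  shows "alg_1_choosable b E"
proof -
  let ?g = "\<lambda>e. f ` e"
  have inj: "inj_on ?g E" using inj_on_image_edges[OF strict_mono_on_imp_inj_on[OF assms(1)] assms(2)] .
  obtain K where K: "(\<Sum>e\<in>?g ` E. K e) = card (?g ` E)" "\<forall>e\<in>?g ` E. K e \<le> b - 1"
    "Poly_Mapping.lookup (graph_poly (?g ` E)) (monomial_exp (?g ` E) K) \<noteq> 0"
    using assms(4) unfolding alg_1_choosable_def by blast
  define K' where "K' e = K (?g e)" for e
  have s: "(\<Sum>e\<in>E. K' e) = card E"
    using K(1) sum.reindex[OF inj, of K] card_image[OF inj] by (simp add: K'_def)
  have bnd: "\<forall>e\<in>E. K' e \<le> b - 1" using K(2) by (simp add: K'_def)
  have me: "monom_rename ?g (monomial_exp E K') = monomial_exp (?g ` E) K"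
  proof -
    have "monom_rename ?g (monomial_exp E K') = (\<Sum>e\<in>E. Poly_Mapping.single (?g e) (K (?g e)))"
      by (simp add: monomial_exp_def monom_rename_sum K'_def)
    also have "\<dots> = monomial_exp (?g ` E) K"
      unfolding monomial_exp_def using sum.reindex[OF inj, of "\<lambda>e. Poly_Mapping.single e (K e)"] by simp
    finally show ?thesis .
  qed
  have "Poly_Mapping.lookup (graph_poly E) (monomial_exp E K') =
        Poly_Mapping.lookup (poly_rename ?g (graph_poly E)) (monom_rename ?g (monomial_exp E K'))"
    using lookup_poly_rename[OF inj, of "graph_poly E" "monomial_exp E K'"] vars_in_graph_poly[of E]
      keys_monomial_exp[of E K'] unfolding vars_in_def by simp
  also have "\<dots> = Poly_Mapping.lookup (graph_poly (?g ` E)) (monomial_exp (?g ` E) K)"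
    using poly_rename_graph_poly[OF assms(1-3)] me by simp
  finally have "Poly_Mapping.lookup (graph_poly E) (monomial_exp E K') \<noteq> 0" using K(3) by simp
  then show ?thesis using s bnd unfolding alg_1_choosable_def by blast
qed

definition rank_in :: "nat set \<Rightarrow> nat \<Rightarrow> nat" where
  "rank_in V v = card {u\<in>V. u < v} + 1"

lemma strict_mono_on_rank_in: assumes "finite V" shows "strict_mono_on V (rank_in V)"
proof (rule strict_mono_onI)
  fix x y assume xy: "x \<in> V" "y \<in> V" "x < y"
  have "{u\<in>V. u < x} \<subset> {u\<in>V. u < y}" using xy by auto
  then have "card {u\<in>V. u < x} < card {u\<in>V. u < y}"
    using assms by (intro psubset_card_mono) auto
  then show "rank_in V x < rank_in V y" by (simp add: rank_in_def)
qed

lemma rank_in_range: assumes "finite V" "v \<in> V" shows "rank_in V v \<in> {1..card V}"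
proof -
  have "{u\<in>V. u < v} \<subset> V" using assms(2) by auto
  then have "card {u\<in>V. u < v} < card V" using assms(1) by (intro psubset_card_mono) auto
  then show ?thesis by (simp add: rank_in_def)
qed

lemma deg_image:
  assumes "inj_on f V" "edges_within V E" "v \<in> V"
  shows "deg ((\<lambda>e. f ` e) ` E) (f v) = deg E v"
proof -
  have sub: "inc E v \<subseteq> E" by (auto simp: inc_def)
  have inj: "inj_on (\<lambda>e. f ` e) (inc E v)"
    using inj_on_subset[OF inj_on_image_edges[OF assms(1,2)] sub] .
  have "deg ((\<lambda>e. f ` e) ` E) (f v) = card ((\<lambda>e. f ` e) ` inc E v)"
    unfolding deg_def inc_image[OF assms] by (rule refl)
  also have "\<dots> = card (inc E v)" by (rule card_image[OF inj])
  finally show ?thesis by (simp add: deg_def)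
qed

lemma nice_image:
  assumes "inj_on f V" "edges_within V E" "nice E"
  shows "nice ((\<lambda>e. f ` e) ` E)"
  unfolding nice_def isolated_edges_def
proof (rule ccontr)
  assume "{e \<in> (\<lambda>e. f ` e) ` E. \<forall>v\<in>e. deg ((\<lambda>e. f ` e) ` E) v = 1} \<noteq> {}"
  then obtain e where e: "e \<in> E" "\<forall>v\<in>f ` e. deg ((\<lambda>e. f ` e) ` E) v = 1" by blast
  have "e \<subseteq> V" using edges_within_subset[OF assms(2) e(1)] .
  then have "\<forall>v\<in>e. deg E v = 1" using e(2) deg_image[OF assms(1,2)] by (metis image_eqI subsetD)
  then have "e \<in> isolated_edges E" using e(1) by (simp add: isolated_edges_def)
  then show False using assms(3) by (simp add: nice_def)
qed

lemma simple_graph_image: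
  assumes "strict_mono_on V f" "edges_within V E" "\<forall>v\<in>V. f v \<in> {1..m}"
  shows "simple_graph m ((\<lambda>e. f ` e) ` E)"
  unfolding simple_graph_def
proof
  fix e'' assume "e'' \<in> (\<lambda>e. f ` e) ` E"
  then obtain e where e: "e \<in> E" "e'' = f ` e" by blast
  obtain x y where xy: "e = {x,y}" "x \<noteq> y" "x \<in> V" "y \<in> V" using assms(2) e(1) unfolding edges_within_def by blast
  have "f x \<noteq> f y" using strict_mono_on_imp_inj_on[OF assms(1)] xy(2-4) by (auto dest: inj_onD)
  moreover have "e'' = {f x, f y}" using e(2) xy(1) by simp
  ultimately show "\<exists>i j. e'' = {i, j} \<and> i \<noteq> j \<and> i \<in> {1..m} \<and> j \<in> {1..m}"
    using assms(3) xy(3,4) by blast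
qed

lemma alg_1_choosable_if_fewer_vertices:
  assumes "finite V" "card V < n" "edges_within V E" "nice E"
    and H: "\<forall>m<n. \<forall>E'. simple_graph m E' \<and> nice E' \<longrightarrow> alg_1_choosable b E'"
  shows "alg_1_choosable b E"
proof -
  let ?f = "rank_in V"
  have o: "strict_mono_on V ?f" by (rule strict_mono_on_rank_in[OF assms(1)])
  have fE: "finite E"
  proof -
    have "E \<subseteq> Pow V" using assms(3) unfolding edges_within_def by auto
    then show ?thesis using assms(1) finite_subset by blast
  qed
  have "simple_graph (card V) ((\<lambda>e. ?f ` e) ` E)"
    by (rule simple_graph_image[OF o assms(3)]) (use rank_in_range[OF assms(1)] in blast)
  moreover have "nice ((\<lambda>e. ?f ` e) ` E)"
    by (rule nice_image[OF strict_mono_on_imp_inj_on[OF o] assms(3,4)])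
  ultimately have "alg_1_choosable b ((\<lambda>e. ?f ` e) ` E)" using H assms(2) by blast
  then show ?thesis by (rule alg_1_choosable_relabel[OF o assms(3) fE])
qed

lemma simple_graph_doubletons: "simple_graph n E \<Longrightarrow> doubletons E"
  unfolding simple_graph_def doubletons_def by blast

lemma simple_graph_edges_within: "simple_graph n E \<Longrightarrow> edges_within {1..n} E"
  unfolding simple_graph_def edges_within_def by blast

lemma simple_graph_finite: assumes "simple_graph n E" shows "finite E"
proof -
  have "E \<subseteq> Pow {1..n}" using assms unfolding simple_graph_def by auto
  then show ?thesis using finite_subset by blast
qed

lemma doubletons_subset: "doubletons E \<Longrightarrow> F \<subseteq> E \<Longrightarrow> doubletons F"
  unfolding doubletons_def by blast

lemma nbrs_sym: "u \<in> nbrs E v \<longleftrightarrow> v \<in> nbrs E u"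
  by (simp add: nbrs_def insert_commute)

lemma nbrs_irrefl: "doubletons E \<Longrightarrow> v \<notin> nbrs E v"
proof
  assume "doubletons E" "v \<in> nbrs E v"
  then have "{v} \<in> E" by (simp add: nbrs_def)
  then obtain x y where "{v} = {x,y}" "x \<noteq> y" using \<open>doubletons E\<close> unfolding doubletons_def by blast
  then have "x = v" "y = v" by (metis insertCI singletonD)+
  then show False using \<open>x \<noteq> y\<close> by simp
qed

lemma inc_nbrs:
  assumes "doubletons E"
  shows "inc E v = (\<lambda>u. {v,u}) ` nbrs E v"
proof (rule set_eqI)
  fix e
  show "e \<in> inc E v \<longleftrightarrow> e \<in> (\<lambda>u. {v,u}) ` nbrs E v"
  proof
    assume "e \<in> inc E v"
    then have e: "e \<in> E" "v \<in> e" by (auto simp: inc_def)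
    obtain x y where xy: "e = {x,y}" "x \<noteq> y" using assms e(1) unfolding doubletons_def by blast
    show "e \<in> (\<lambda>u. {v,u}) ` nbrs E v"
    proof (cases "v = x")
      case True
      then have "e = {v,y}" "y \<in> nbrs E v" using xy e by (auto simp: nbrs_def)
      then show ?thesis by blast
    next
      case False
      then have "v = y" using xy e by auto
      then have "e = {v,x}" "x \<in> nbrs E v" using xy e by (auto simp: nbrs_def insert_commute)
      then show ?thesis by blast
    qed
  next
    assume "e \<in> (\<lambda>u. {v,u}) ` nbrs E v"
    then show "e \<in> inc E v" by (auto simp: inc_def nbrs_def)
  qed
qed

lemma deg_nbrs:
  assumes "doubletons E"
  shows "deg E v = card (nbrs E v)"
proof -
  have "inj_on (\<lambda>u. {v,u}) (nbrs E v)"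
  proof (rule inj_onI)
    fix a b assume ab: "a \<in> nbrs E v" "b \<in> nbrs E v" "{v,a} = {v,b}"
    have "a \<noteq> v" "b \<noteq> v" using ab(1,2) nbrs_irrefl[OF assms] by auto
    then show "a = b" using ab(3) by (metis doubleton_eq_iff)
  qed
  then show ?thesis unfolding deg_def inc_nbrs[OF assms] by (rule card_image)
qed

lemma nbrs_filter: "nbrs {e\<in>E. P e} v = {u \<in> nbrs E v. P {v,u}}"
  by (auto simp: nbrs_def)

lemma card_eq_1_iff_singleton: "z \<in> A \<Longrightarrow> card A = 1 \<longleftrightarrow> A = {z}"
  by (metis card_1_singletonE card.empty card_insert_disjoint empty_iff finite.emptyI singletonD One_nat_def)

lemma isolated_edge_iff:
  assumes "doubletons F" "finite F" "y \<noteq> z"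
  shows "{y,z} \<in> isolated_edges F \<longleftrightarrow> {y,z} \<in> F \<and> nbrs F y = {z} \<and> nbrs F z = {y}"
proof -
  have a: "{y,z} \<in> F \<Longrightarrow> z \<in> nbrs F y" "{y,z} \<in> F \<Longrightarrow> y \<in> nbrs F z"
    by (simp_all add: nbrs_def insert_commute)
  have "{y,z} \<in> isolated_edges F \<longleftrightarrow> {y,z} \<in> F \<and> card (nbrs F y) = 1 \<and> card (nbrs F z) = 1"
    unfolding isolated_edges_def deg_nbrs[OF assms(1)] by auto
  also have "\<dots> \<longleftrightarrow> {y,z} \<in> F \<and> nbrs F y = {z} \<and> nbrs F z = {y}"
    using card_eq_1_iff_singleton[OF a(1)] card_eq_1_iff_singleton[OF a(2)] by auto
  finally show ?thesis .
qed

lemma isolated_edgeE: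
  assumes "e \<in> isolated_edges F" "doubletons F" "finite F"
  obtains y z where "y \<noteq> z" "e = {y,z}" "{y,z} \<in> F" "nbrs F y = {z}" "nbrs F z = {y}"
proof -
  have "e \<in> F" using assms(1) by (simp add: isolated_edges_def)
  then obtain y z where yz: "e = {y,z}" "y \<noteq> z" using assms(2) unfolding doubletons_def by blast
  then show ?thesis using that assms isolated_edge_iff[OF assms(2,3) yz(2)] by auto
qed

lemma nbrs_E3: assumes "doubletons E"
  shows "nbrs (E3 E J) v = (if v \<in> J then nbrs E v - J else nbrs E v \<inter> J)"
proof -
  have "card ({v,u} \<inter> J) = 1 \<longleftrightarrow> (if v \<in> J then u \<notin> J else u \<in> J)" if "u \<in> nbrs E v" for u
  proof -
    have uv: "u \<noteq> v" using that nbrs_irrefl[OF assms] by auto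
    show ?thesis
    proof (cases "v \<in> J"; cases "u \<in> J")
      assume "v \<in> J" "u \<in> J"
      then have "{v,u} \<inter> J = {v,u}" by auto
      then show ?thesis using uv \<open>v \<in> J\<close> \<open>u \<in> J\<close> by simp
    next
      assume "v \<in> J" "u \<notin> J"
      then have "{v,u} \<inter> J = {v}" by auto
      then show ?thesis using \<open>v \<in> J\<close> \<open>u \<notin> J\<close> by simp
    next
      assume "v \<notin> J" "u \<in> J"
      then have "{v,u} \<inter> J = {u}" by auto
      then show ?thesis using \<open>v \<notin> J\<close> \<open>u \<in> J\<close> by simp
    next
      assume "v \<notin> J" "u \<notin> J"
      then have "{v,u} \<inter> J = {}" by auto
      then show ?thesis using \<open>v \<notin> J\<close> \<open>u \<notin> J\<close> by simp
    qed
  qed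
  then have "nbrs (E3 E J) v = {u \<in> nbrs E v. if v \<in> J then u \<notin> J else u \<in> J}"
    unfolding E3_def nbrs_filter by blast
  then show ?thesis by auto
qed

lemma nbrs_E4: "nbrs (E4 E J) v = (if v \<in> J then nbrs E v \<inter> J else {})"
  unfolding E4_def nbrs_filter by auto

lemma nbrs_avoiding: "nbrs {e\<in>E. e \<inter> X = {}} v = (if v \<in> X then {} else nbrs E v - X)"
  unfolding nbrs_filter by auto

section \<open>The minimal counterexample\<close>

locale min_counterexample =
  fixes n :: nat and E :: "nat set set" and J :: "nat set" and i i' :: nat
  assumes simple: "simple_graph n E"
    and nice_E: "nice E"
    and not_choosable: "\<not> alg_1_choosable 5 E"
    and smaller_choosable: "\<forall>m < n. \<forall>E'. simple_graph m E' \<and> nice E' \<longrightarrow> alg_1_choosable 5 E'"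
    and good: "good_subset {1..n} E J"
    and J_minimal: "\<forall>J'. good_subset {1..n} E J' \<longrightarrow> card J \<le> card J'"
    and E2_edge: "{i, i'} \<in> E2 E J"
begin

abbreviation "V \<equiv> {1..n}"
abbreviation "N v \<equiv> nbrs E v"

lemma doubletons_E: "doubletons E" using simple_graph_doubletons[OF simple] .
lemma finite_E: "finite E" using simple_graph_finite[OF simple] .
lemma edges_within_E: "edges_within V E" using simple_graph_edges_within[OF simple] .

lemma doubletons_sub: "F \<subseteq> E \<Longrightarrow> doubletons F" using doubletons_subset[OF doubletons_E] .
lemma finite_sub: "F \<subseteq> E \<Longrightarrow> finite F" using finite_E finite_subset by blast

lemma nbrs_in_V: assumes "u \<in> N v" shows "u \<in> V" "v \<in> V"
proof -
  have "{v,u} \<in> E" using assms by (simp add: nbrs_def)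
  then obtain x y where "{v,u} = {x,y}" "x \<in> V" "y \<in> V"
    using edges_within_E unfolding edges_within_def by blast
  then show "u \<in> V" "v \<in> V" by (metis doubleton_eq_iff)+
qed

lemma not_in_own_nbrs: "v \<notin> N v" using nbrs_irrefl[OF doubletons_E] .

lemma edge_containing:
  assumes "g \<in> E" "v \<in> g"
  obtains u where "g = {v,u}" "u \<in> N v"
proof -
  obtain x y where xy: "g = {x,y}" using doubletons_E assms(1) unfolding doubletons_def by blast
  then have "g = {v, if v = x then y else x}" using assms(2) by auto
  with that assms(1) show thesis by (auto simp: nbrs_def)
qed

lemma J_subset_V: "J \<subseteq> V" using good by (simp add: good_subset_def)
lemma finite_J: "finite J" using J_subset_V finite_subset by blast

lemma deg_E4_le_1: "\<forall>v\<in>J. deg (E4 E J) v \<le> 1"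
  using good by (simp add: good_subset_def)
lemma nice_E3: "nice (E3 E J)"
  using good by (simp add: good_subset_def)
lemma card_private_nbrs_le_1: "\<forall>j\<in>J. card {i. private_nbr V E J i j} \<le> 1"
  using good by (simp add: good_subset_def)
lemma E4_witnesses: "\<exists>ie. inj_on ie (E4 E J) \<and> (\<forall>e\<in>E4 E J. ie e \<in> V - J \<and>
    e \<subseteq> nbrs (E3 E J) (ie e) \<and> (\<forall>j\<in>e. \<not> has_private V E J j))"
  using good by (simp add: good_subset_def)
lemma E2_J_nbrs: "\<forall>e\<in>E2 E J. \<forall>v\<in>e. \<exists>j\<in>J. {v,j} \<in> E"
  using good by (simp add: good_subset_def)

lemma E3_nbrs: "nbrs (E3 E J) v = (if v \<in> J then N v - J else N v \<inter> J)"
  using nbrs_E3[OF doubletons_E] .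

lemma E3_subset: "E3 E J \<subseteq> E" by (auto simp: E3_def)
lemma E4_subset: "E4 E J \<subseteq> E" by (auto simp: E4_def)

lemma E3_no_isolated_edge:
  assumes "nbrs (E3 E J) a = {b}" "nbrs (E3 E J) b = {a}" shows False
proof -
  have ab: "a \<noteq> b" using assms(1) nbrs_irrefl[OF doubletons_sub[OF E3_subset]] by auto
  have "{a,b} \<in> E3 E J" using assms(1) by (auto simp: nbrs_def)
  then have "{a,b} \<in> isolated_edges (E3 E J)"
    using isolated_edge_iff[OF doubletons_sub[OF E3_subset] finite_sub[OF E3_subset] ab] assms by simp
  then show False using nice_E3 by (simp add: nice_def)
qed

lemma E2_edge_has_J_nbr:
  assumes "{y,z} \<in> E" "y \<notin> J" "z \<notin> J" "N y - J = {z}" "N z - J = {y}"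
  shows "N y \<inter> J \<noteq> {}"
proof -
  let ?F = "{e\<in>E. e \<inter> J = {}}"
  have F: "?F \<subseteq> E" by auto
  have yz: "y \<noteq> z" using assms(4) not_in_own_nbrs by auto
  have "{y,z} \<in> ?F" using assms(1-3) by auto
  moreover have "nbrs ?F y = {z}" "nbrs ?F z = {y}" using assms(2-5) by (simp_all add: nbrs_avoiding)
  ultimately have "{y,z} \<in> E2 E J"
    unfolding E2_def using isolated_edge_iff[OF doubletons_sub[OF F] finite_sub[OF F] yz] by simp
  then obtain j where "j \<in> J" "{y,j} \<in> E" using E2_J_nbrs by blast
  then show ?thesis by (auto simp: nbrs_def)
qed

lemma E4_edge_witness:
  assumes "a \<in> J" "b \<in> J" "{a,b} \<in> E"
  obtains c where "c \<in> V - J" "a \<in> N c" "b \<in> N c"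
    "\<not> has_private V E J a" "\<not> has_private V E J b"
proof -
  obtain ie where ie: "\<forall>e\<in>E4 E J. ie e \<in> V - J \<and> e \<subseteq> nbrs (E3 E J) (ie e) \<and>
      (\<forall>j\<in>e. \<not> has_private V E J j)"
    using E4_witnesses by blast
  have "{a,b} \<in> E4 E J" using assms by (simp add: E4_def)
  then have "ie {a,b} \<in> V - J" "{a,b} \<subseteq> nbrs (E3 E J) (ie {a,b})"
    "\<not> has_private V E J a" "\<not> has_private V E J b" using ie by auto
  then show thesis using that E3_nbrs[of "ie {a,b}"] by auto
qed

lemma private_nbr_unique:
  assumes "j \<in> J" "private_nbr V E J v j" "private_nbr V E J v' j" shows "v = v'"
proof -
  have "finite {x. private_nbr V E J x j}"
    by (rule finite_subset[of _ V]) (auto simp: private_nbr_def)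
  then show ?thesis
    using card_private_nbrs_le_1 assms by (auto simp: card_le_Suc0_iff_eq)
qed

lemma E2_edge_facts: "i \<notin> J" "i' \<notin> J" "{i,i'} \<in> E" "i \<noteq> i'" "N i - J = {i'}" "N i' - J = {i}"
proof -
  let ?F = "{e\<in>E. e \<inter> J = {}}"
  have F: "?F \<subseteq> E" by auto
  have iso: "{i,i'} \<in> isolated_edges ?F" using E2_edge by (simp add: E2_def)
  then have "{i,i'} \<in> ?F" by (simp add: isolated_edges_def)
  then show a: "i \<notin> J" "i' \<notin> J" "{i,i'} \<in> E" by auto
  show b: "i \<noteq> i'" using a(3) not_in_own_nbrs by (auto simp: nbrs_def)
  have "nbrs ?F i = {i'}" "nbrs ?F i' = {i}"
    using iso isolated_edge_iff[OF doubletons_sub[OF F] finite_sub[OF F] b] by auto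
  then show "N i - J = {i'}" "N i' - J = {i}" using a by (simp_all add: nbrs_avoiding)
qed

lemma deg_E3_eq_card_J_nbrs: "deg (E3 E J) i = card (N i \<inter> J)"
  using deg_nbrs[OF doubletons_sub[OF E3_subset], of i] E3_nbrs[of i] E2_edge_facts(1) by simp

lemma special_J_nbr_exists:
  assumes "card (N i \<inter> J) \<ge> 2" "card {j \<in> J. {i, j} \<in> E \<and> \<not> special_nbr V E J j i} < 2"
  obtains s where "special_nbr V E J s i"
proof -
  have "\<exists>s. special_nbr V E J s i"
  proof (rule ccontr)
    assume "\<nexists>s. special_nbr V E J s i"
    then have "{j \<in> J. {i, j} \<in> E \<and> \<not> special_nbr V E J j i} = N i \<inter> J" by (auto simp: nbrs_def)
    then show False using assms by simp
  qed
  then show thesis using that by blast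
qed

lemma special_nbr_has_no_J_nbr:
  assumes "special_nbr V E J s i"
  shows "N s \<inter> J = {}"
proof (rule ccontr)
  assume "N s \<inter> J \<noteq> {}"
  then obtain u where "u \<in> N s" "u \<in> J" by blast
  moreover have "s \<in> J" "has_private V E J s" using assms by (auto simp: special_nbr_def)
  ultimately show False using E4_edge_witness[of s u] by (auto simp: nbrs_def)
qed

lemma special_nbrE:
  assumes special: "special_nbr V E J s i"
  obtains p where "s \<in> J" "p \<notin> J" "p \<noteq> i" "N s = {i,p}" "N p \<inter> J = {s}"
proof -
  have s: "s \<in> J" "has_private V E J s" "nonprivate_nbrs V E J s = {i}"
    using special by (auto simp: special_nbr_def)
  obtain p where p: "private_nbr V E J p s" using s(2) by (auto simp: has_private_def)
  have pJ: "p \<notin> J" "N p \<inter> J = {s}" using p E3_nbrs[of p] by (auto simp: private_nbr_def)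
  have i: "i \<in> nbrs (E3 E J) s" "\<not> private_nbr V E J i s"
    using s(3) by (auto simp: nonprivate_nbrs_def)
  have "N s = nbrs (E3 E J) s"
    using E3_nbrs[of s] s(1) special_nbr_has_no_J_nbr[OF special] by auto
  also have "\<dots> = {i,p}"
  proof
    show "nbrs (E3 E J) s \<subseteq> {i,p}"
      using s(3) private_nbr_unique[OF s(1) _ p] by (auto simp: nonprivate_nbrs_def)
    have "s \<in> N p" using pJ(2) by auto
    then show "{i,p} \<subseteq> nbrs (E3 E J) s"
      using i(1) E3_nbrs[of s] s(1) pJ(1) nbrs_sym by auto
  qed
  finally show thesis using that s(1) pJ i(2) p by auto
qed

lemma alg_1_choosable_delete_vertices:
  assumes "X \<subseteq> V" "X \<noteq> {}" "nice {e\<in>E. e \<inter> X = {}}"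
  shows "alg_1_choosable 5 {e\<in>E. e \<inter> X = {}}"
proof (rule alg_1_choosable_if_fewer_vertices[of "V - X"])
  have "finite X" using assms(1) finite_subset by blast
  then have "0 < card X" "card X \<le> n"
    using assms(1,2) card_mono[of V X] by (auto simp: card_gt_0_iff)
  then show "card (V - X) < n"
    using card_Diff_subset[OF \<open>finite X\<close> assms(1)] by simp
  show "edges_within (V - X) {e\<in>E. e \<inter> X = {}}"
    using edges_within_E unfolding edges_within_def by fastforce
  show "nice {e\<in>E. e \<inter> X = {}}" by (rule assms(3))
qed (use smaller_choosable in auto)

text \<open>An isolated edge \<open>{a,b}\<close> of \<open>G - X\<close>, oriented so that \<open>a\<close> has a neighbour in \<open>X\<close>
  (one end does, as \<open>G\<close> is nice).\<close>

definition new_isolated_edge :: "nat set \<Rightarrow> nat \<Rightarrow> nat \<Rightarrow> bool" where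
  "new_isolated_edge X a b \<longleftrightarrow> a \<noteq> b \<and> {a,b} \<in> E \<and> a \<notin> X \<and> b \<notin> X \<and>
     N a - X = {b} \<and> N b - X = {a} \<and> N a \<noteq> {b}"

lemma new_isolated_edge_if_not_nice:
  assumes "\<not> nice {e\<in>E. e \<inter> X = {}}"
  obtains a b where "new_isolated_edge X a b"
proof -
  let ?F = "{e\<in>E. e \<inter> X = {}}"
  have F: "?F \<subseteq> E" by auto
  obtain e where "e \<in> isolated_edges ?F" using assms by (auto simp: nice_def)
  then obtain y z where yz: "y \<noteq> z" "{y,z} \<in> ?F" "nbrs ?F y = {z}" "nbrs ?F z = {y}"
    by (rule isolated_edgeE[OF _ doubletons_sub[OF F] finite_sub[OF F]])
  have yzX: "y \<notin> X" "z \<notin> X" "{y,z} \<in> E" "{z,y} \<in> E" using yz(2) by (auto simp: insert_commute)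
  have N: "N y - X = {z}" "N z - X = {y}" using yz(3,4) yzX by (simp_all add: nbrs_avoiding)
  have "\<not> (N y = {z} \<and> N z = {y})"
  proof
    assume "N y = {z} \<and> N z = {y}"
    then have "{y,z} \<in> isolated_edges E" using isolated_edge_iff[OF doubletons_E finite_E yz(1)] yzX by simp
    then show False using nice_E by (simp add: nice_def)
  qed
  then have "new_isolated_edge X y z \<or> new_isolated_edge X z y"
    using yz(1) yzX N by (auto simp: new_isolated_edge_def)
  then show thesis using that by blast
qed

end

locale special_nbr_setting = min_counterexample +
  fixes s p :: nat
  assumes s_J: "s \<in> J" and p_J: "p \<notin> J" and p_ne_i: "p \<noteq> i"
    and N_s: "N s = {i,p}" and N_p_J: "N p \<inter> J = {s}"
begin

lemma i_J: "i \<notin> J" using E2_edge_facts(1) .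
lemma i'_J: "i' \<notin> J" using E2_edge_facts(2) .

lemma N_s_J: "N s \<inter> J = {}" using N_s i_J p_J by auto

lemma s_in_N: "s \<in> N u \<longleftrightarrow> u = i \<or> u = p" using N_s nbrs_sym by auto

lemma s_in_N_i: "s \<in> N i" using s_in_N by simp

lemma i_V: "i \<in> V" using nbrs_in_V(1) s_in_N_i by (simp add: nbrs_sym)
lemma s_V: "s \<in> V" using s_J J_subset_V by auto

end

section \<open>Three neighbours in \<open>J\<close>\<close>

locale three_J_nbrs = special_nbr_setting +
  assumes three_J_nbrs: "card (N i \<inter> J) \<ge> 3"
begin

abbreviation "J' \<equiv> J - {s}"

lemma two_le_card_J'_nbrs: "card (N i \<inter> J') \<ge> 2"
proof -
  have "N i \<inter> J' = (N i \<inter> J) - {s}" by auto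
  then have "card (N i \<inter> J') = card (N i \<inter> J) - 1" using s_in_N_i s_J finite_J by simp
  then show ?thesis using three_J_nbrs by simp
qed

lemma E3_J'_nbrs: "nbrs (E3 E J') v = (if v \<in> J' then N v - J' else N v \<inter> J')"
  using nbrs_E3[OF doubletons_E] .

lemma E3_J'_nbrs_eq: "v \<notin> {s,i,p} \<Longrightarrow> nbrs (E3 E J') v = nbrs (E3 E J) v"
  using s_in_N[of v] by (auto simp: E3_J'_nbrs E3_nbrs)

lemma E3_J'_nbrs_not_singleton:
  assumes "v \<in> {s,i,p}" shows "nbrs (E3 E J') v \<noteq> {x}"
proof -
  have "nbrs (E3 E J') s = {}" using E3_J'_nbrs[of s] N_s_J by auto
  moreover have "nbrs (E3 E J') i \<noteq> {x}"
  proof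
    assume "nbrs (E3 E J') i = {x}"
    then have "N i \<inter> J' = {x}" using E3_J'_nbrs[of i] i_J by simp
    then show False using two_le_card_J'_nbrs by simp
  qed
  moreover have "nbrs (E3 E J') p = {}" using E3_J'_nbrs[of p] p_J N_p_J by auto
  ultimately show ?thesis using assms by auto
qed

lemma private_nbr_J'_imp:
  assumes "private_nbr V E J' v j" shows "private_nbr V E J v j"
proof -
  have v: "v \<in> V" "v \<notin> J'" "nbrs (E3 E J') v = {j}" using assms by (auto simp: private_nbr_def)
  then have "v \<notin> {s,i,p}" using E3_J'_nbrs_not_singleton by blast
  then show ?thesis using v E3_J'_nbrs_eq by (auto simp: private_nbr_def)
qed

lemma has_private_J'_imp: "has_private V E J' j \<Longrightarrow> has_private V E J j"
  using private_nbr_J'_imp by (auto simp: has_private_def)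

lemma deg_E4_J'_le_1: "\<forall>v\<in>J'. deg (E4 E J') v \<le> 1"
proof
  fix v assume v: "v \<in> J'"
  have "deg (E4 E J') v = card (N v \<inter> J')"
    using deg_nbrs[OF doubletons_sub[of "E4 E J'"]] nbrs_E4[of E J' v] v by (simp add: E4_def)
  also have "\<dots> \<le> card (N v \<inter> J)"
    by (rule card_mono) (use finite_J in auto)
  also have "\<dots> = deg (E4 E J) v"
    using deg_nbrs[OF doubletons_sub[OF E4_subset]] nbrs_E4[of E J v] v by simp
  also have "\<dots> \<le> 1" using deg_E4_le_1 v by blast
  finally show "deg (E4 E J') v \<le> 1" .
qed

lemma nice_E3_J': "nice (E3 E J')"
proof (rule ccontr)
  assume "\<not> nice (E3 E J')"
  then obtain e where "e \<in> isolated_edges (E3 E J')" by (auto simp: nice_def)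
  moreover have F: "E3 E J' \<subseteq> E" by (auto simp: E3_def)
  ultimately obtain y z where yz: "nbrs (E3 E J') y = {z}" "nbrs (E3 E J') z = {y}"
    using isolated_edgeE[OF _ doubletons_sub[OF F] finite_sub[OF F]] by metis
  then have "y \<notin> {s,i,p}" "z \<notin> {s,i,p}" using E3_J'_nbrs_not_singleton by blast+
  then show False using E3_no_isolated_edge yz E3_J'_nbrs_eq by simp
qed

lemma card_private_nbrs_J'_le_1: "\<forall>j\<in>J'. card {v. private_nbr V E J' v j} \<le> 1"
proof
  fix j assume j: "j \<in> J'"
  have "finite {v. private_nbr V E J v j}"
    by (rule finite_subset[of _ V]) (auto simp: private_nbr_def)
  then have "card {v. private_nbr V E J' v j} \<le> card {v. private_nbr V E J v j}"
    using private_nbr_J'_imp by (intro card_mono) auto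
  also have "\<dots> \<le> 1" using card_private_nbrs_le_1 j by auto
  finally show "card {v. private_nbr V E J' v j} \<le> 1" .
qed

lemma E4_J'_witnesses: "\<exists>ie. inj_on ie (E4 E J') \<and> (\<forall>e\<in>E4 E J'. ie e \<in> V - J' \<and>
    e \<subseteq> nbrs (E3 E J') (ie e) \<and> (\<forall>j\<in>e. \<not> has_private V E J' j))"
proof -
  obtain ie where ie: "inj_on ie (E4 E J)" "\<forall>e\<in>E4 E J. ie e \<in> V - J \<and>
      e \<subseteq> nbrs (E3 E J) (ie e) \<and> (\<forall>j\<in>e. \<not> has_private V E J j)"
    using E4_witnesses by blast
  have sub: "E4 E J' \<subseteq> E4 E J" by (auto simp: E4_def)
  have "ie e \<in> V - J' \<and> e \<subseteq> nbrs (E3 E J') (ie e) \<and> (\<forall>j\<in>e. \<not> has_private V E J' j)"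
    if e: "e \<in> E4 E J'" for e
  proof -
    have "e \<subseteq> J'" using e by (simp add: E4_def)
    moreover have ie_e: "ie e \<in> V - J" "e \<subseteq> nbrs (E3 E J) (ie e)" "\<forall>j\<in>e. \<not> has_private V E J j"
      using ie(2) sub e by auto
    moreover have "e \<subseteq> N (ie e) \<inter> J" using ie_e(1,2) E3_nbrs[of "ie e"] by simp
    ultimately show ?thesis using E3_J'_nbrs[of "ie e"] has_private_J'_imp by auto
  qed
  then show ?thesis using inj_on_subset[OF ie(1) sub] by blast
qed

lemma E2_J'_edge_has_J'_nbr:
  assumes ab: "{a,b} \<in> E" "a \<notin> J'" "b \<notin> J'" "N a - J' = {b}" "N b - J' = {a}"
  shows "\<exists>j\<in>J'. {a,j} \<in> E"
proof -
  have "N s - J' = {i,p}" using N_s i_J p_J by auto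
  then have "a \<noteq> s" "b \<noteq> s" using ab(4,5) p_ne_i by (auto simp: doubleton_eq_iff)
  then have abJ: "a \<notin> J" "b \<notin> J" using ab(2,3) by auto
  have "N a - J = {b}" "N b - J = {a}" using ab(4,5) abJ ab(1) by (auto simp: nbrs_def insert_commute)
  then obtain j where j: "j \<in> N a" "j \<in> J" using E2_edge_has_J_nbr[OF ab(1) abJ] by blast
  show ?thesis
  proof (cases "j = s")
    case False
    then show ?thesis using j by (auto simp: nbrs_def)
  next
    case True
    then have "a = i \<or> a = p" using j(1) s_in_N by (simp add: nbrs_sym)
    moreover have "{i', s} \<subseteq> N i - J'" "i' \<noteq> s"
      using E2_edge_facts s_in_N_i i_J i'_J s_J by auto
    moreover have "s \<in> N p - J'" using N_p_J by auto
    ultimately show ?thesis using ab(4) \<open>b \<noteq> s\<close> by auto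
  qed
qed

lemma E2_J'_J_nbrs: "\<forall>e\<in>E2 E J'. \<forall>v\<in>e. \<exists>j\<in>J'. {v,j} \<in> E"
proof (intro ballI)
  fix e v assume e: "e \<in> E2 E J'" and v: "v \<in> e"
  let ?F = "{e\<in>E. e \<inter> J' = {}}"
  have F: "?F \<subseteq> E" by auto
  have "e \<in> isolated_edges ?F" using e by (simp add: E2_def)
  then obtain y z where yz: "e = {y,z}" "{y,z} \<in> ?F" "nbrs ?F y = {z}" "nbrs ?F z = {y}"
    by (rule isolated_edgeE[OF _ doubletons_sub[OF F] finite_sub[OF F]])
  have yz': "y \<notin> J'" "z \<notin> J'" "{y,z} \<in> E" "{z,y} \<in> E" using yz(2) by (auto simp: insert_commute)
  have "N y - J' = {z}" "N z - J' = {y}"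
    using yz(3,4) unfolding nbrs_avoiding if_not_P[OF yz'(1)] if_not_P[OF yz'(2)] .
  then show "\<exists>j\<in>J'. {v,j} \<in> E"
    using E2_J'_edge_has_J'_nbr[of y z] E2_J'_edge_has_J'_nbr[of z y] yz' v yz(1) by auto
qed

lemma good_subset_J': "good_subset V E J'"
proof -
  have "J' \<noteq> {}" using two_le_card_J'_nbrs by (metis Int_empty_right card.empty not_numeral_le_zero)
  then show ?thesis
    unfolding good_subset_def
    using J_subset_V deg_E4_J'_le_1 nice_E3_J' card_private_nbrs_J'_le_1 E4_J'_witnesses E2_J'_J_nbrs
    by blast
qed

end

context special_nbr_setting begin

lemma card_J_nbrs_le_2: "card (N i \<inter> J) \<le> 2"
proof (rule ccontr)
  assume "\<not> card (N i \<inter> J) \<le> 2"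
  then interpret three_J_nbrs n E J i i' s p by unfold_locales simp
  show False using J_minimal good_subset_J' card_Diff1_less[OF finite_J s_J] by fastforce
qed

lemma other_J_nbr:
  assumes "card (N i \<inter> J) \<ge> 2"
  obtains t where "t \<in> J" "s \<noteq> t" "N i \<inter> J = {s,t}"
proof -
  have "card (N i \<inter> J - {s}) = 1"
    using assms card_J_nbrs_le_2 s_in_N_i s_J finite_J by simp
  then obtain t where "N i \<inter> J - {s} = {t}" by (auto simp: card_Suc_eq)
  then show thesis using that s_in_N_i s_J by blast
qed

end

section \<open>Two neighbours in \<open>J\<close>\<close>

locale two_J_nbrs = special_nbr_setting +
  fixes t :: nat
  assumes t_J: "t \<in> J" and s_ne_t: "s \<noteq> t" and N_i_J: "N i \<inter> J = {s,t}"
begin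

lemma N_i: "N i = {s,t,i'}"
  using N_i_J E2_edge_facts(5) by blast

lemma i_in_N: "i \<in> N u \<longleftrightarrow> u = s \<or> u = t \<or> u = i'" using N_i nbrs_sym by auto

lemma N_i'_J: "N i' - J = {i}" using E2_edge_facts(6) .

lemma distinct: "s \<noteq> i" "s \<noteq> p" "i \<noteq> t" "i \<noteq> i'" "t \<noteq> p" "t \<noteq> i'" "s \<noteq> i'"
  using s_J t_J i_J i'_J p_J E2_edge_facts(4) by auto

lemma t_V: "t \<in> V" using t_J J_subset_V by auto

lemma edges_meeting_si: "{g\<in>E. g \<inter> {s,i} \<noteq> {}} = {{s,i}, {s,p}, {i,t}, {i,i'}}"
proof
  show "{g\<in>E. g \<inter> {s,i} \<noteq> {}} \<subseteq> {{s,i}, {s,p}, {i,t}, {i,i'}}"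
  proof
    fix g assume g: "g \<in> {g\<in>E. g \<inter> {s,i} \<noteq> {}}"
    then have "s \<in> g \<or> i \<in> g" by auto
    then show "g \<in> {{s,i}, {s,p}, {i,t}, {i,i'}}"
      by (elim disjE edge_containing[of g, rotated]) (use g N_s N_i in \<open>auto simp: insert_commute\<close>)
  qed
  show "{{s,i}, {s,p}, {i,t}, {i,i'}} \<subseteq> {g\<in>E. g \<inter> {s,i} \<noteq> {}}"
    using N_s N_i by (auto simp: nbrs_def insert_commute)
qed

text \<open>The coefficient extends with \<open>{s,i}\<close> taking the variable of \<open>{s,p}\<close>
  and the other three deleted edges taking that of \<open>{s,i}\<close>: monomial \<open>x_{si}\<^sup>3 x_{sp}\<close>.\<close>

lemma alg_1_choosable_if_avoiding_si:
  assumes choosable: "alg_1_choosable 5 {e\<in>E. e \<inter> {s,i} = {}}"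
  shows "alg_1_choosable 5 E"
proof -
  define si where "si = {s,i}"
  define sp where "sp = {s,p}"
  define it where "it = {i,t}"
  define ii' where "ii' = {i,i'}"
  define F where "F = {g\<in>E. g \<inter> {s,i} \<noteq> {}}"
  have EF: "E - F = {e\<in>E. e \<inter> {s,i} = {}}" by (auto simp: F_def)
  have F: "F = {si, sp, it, ii'}"
    unfolding F_def si_def sp_def it_def ii'_def by (rule edges_meeting_si)
  have dist: "si \<noteq> sp" "si \<noteq> it" "si \<noteq> ii'" "sp \<noteq> it" "sp \<noteq> ii'" "it \<noteq> ii'"
    unfolding si_def sp_def it_def ii'_def using distinct s_ne_t p_ne_i by (auto simp: doubleton_eq_iff)
  have meet: "sp \<inter> si \<noteq> {}" "si \<inter> sp \<noteq> {}" "si \<inter> it \<noteq> {}" "si \<inter> ii' \<noteq> {}"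
    unfolding si_def sp_def it_def ii'_def by auto
  have FE: "F \<subseteq> E" by (auto simp: F_def)
  define w where "w g = (if g \<in> E - F then 1 else if g = si then 0 else if g = sp then 2 else 100::nat)"
    for g
  define h where "h g = (if g = si then sp else si)" for g
  define K where "K g = (if g = si then 3 else if g = sp then 1 else 0::nat)" for g
  show "alg_1_choosable 5 E"
  proof (rule alg_1_choosable_extend[OF finite_E doubletons_E FE choosable[folded EF], of w 1 h K])
    show "\<forall>g\<in>E - F. w g = 1" by (simp add: w_def)
    show "\<forall>e\<in>E - F. \<forall>g\<in>F. g \<inter> e \<noteq> {} \<longrightarrow> 1 < w g"
    proof (intro ballI impI)
      fix e g assume "e \<in> E - F" "g \<in> F" "g \<inter> e \<noteq> {}"
      then have "g \<noteq> si" using EF si_def by auto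
      then show "1 < w g" using \<open>g \<in> F\<close> by (auto simp: w_def)
    qed
    have "si \<in> E" "sp \<in> E" using F FE by auto
    then show "\<forall>f\<in>F. h f \<in> E \<and> h f \<inter> f \<noteq> {} \<and> h f \<noteq> f"
      unfolding F by (auto simp: h_def dist dist[symmetric] meet)
    show "\<forall>f\<in>F. \<forall>g\<in>E. g \<inter> f \<noteq> {} \<longrightarrow> g \<noteq> f \<longrightarrow> g \<noteq> h f \<longrightarrow> w (h f) < w g"
    proof (intro ballI impI)
      fix f g assume f: "f \<in> F" and g: "g \<in> E" "g \<inter> f \<noteq> {}" "g \<noteq> f" "g \<noteq> h f"
      show "w (h f) < w g"
      proof (cases "f = si")
        case True
        then have "g \<in> F" using g F_def si_def by auto
        then have "g = it \<or> g = ii'" using g(3,4) True F by (auto simp: h_def)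
        then show ?thesis using True F dist by (auto simp: h_def w_def)
      next
        case False
        then show ?thesis using g(4) F by (auto simp: h_def w_def)
      qed
    qed
    show "(\<Sum>f\<in>F. Poly_Mapping.single f (K f)) = (\<Sum>f\<in>F. Poly_Mapping.single (h f) 1)"
      unfolding F using dist by (simp add: K_def h_def single_numeral_eq_sum add_ac)
    show "\<forall>f\<in>F. K f \<le> 5 - 1" by (simp add: K_def)
    show "(\<Sum>f\<in>F. K f) = card F" unfolding F using dist by (simp add: K_def)
  qed
qed

lemma not_nice_avoiding_si: "\<not> nice {e\<in>E. e \<inter> {s,i} = {}}"
  using alg_1_choosable_if_avoiding_si alg_1_choosable_delete_vertices[of "{s,i}"] not_choosable s_V i_V
  by auto

lemma new_isolated_si_cases:
  assumes "new_isolated_edge {s,i} a b" shows "a = i' \<or> a = p \<or> a = t"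
proof -
  have "N a \<inter> {s,i} \<noteq> {}" "a \<notin> {s,i}" using assms by (auto simp: new_isolated_edge_def)
  then show ?thesis using s_in_N i_in_N by auto
qed

text \<open>Such an edge \<open>{i', b}\<close> would be an isolated edge of \<open>G_{J,3}\<close>.\<close>

lemma no_new_isolated_edge_at_i':
  assumes new: "new_isolated_edge X i' b" and X: "{s,i} \<subseteq> X" "X \<subseteq> {s,i,t}"
    and t: "t \<notin> N b" "t \<notin> N i'"
  shows False
proof -
  have b: "b \<in> N i'" "i' \<in> N b" "b \<notin> X" "N i' - X = {b}" "N b - X = {i'}"
    using new by (auto simp: new_isolated_edge_def)
  have bJ: "b \<in> J" using b(1,3) X N_i'_J by auto
  have "s \<notin> N b" "i \<notin> N b" using bJ b(3) X s_in_N i_in_N p_J i_J t(2) b(1) i'_J by auto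
  then have "N b = {i'}" using b(2,5) X t(1) by auto
  then have E3_b: "nbrs (E3 E J) b = {i'}" using E3_nbrs[of b] bJ i'_J by auto
  have "s \<notin> N i'"
  proof
    assume "s \<in> N i'"
    then have "i' = p" using s_in_N distinct by auto
    then show False using N_p_J b(1) bJ b(3) X by auto
  qed
  then have "N i' \<inter> J = {b}" using b(1,4) bJ X t(2) i_J by auto
  then have "nbrs (E3 E J) i' = {b}" using E3_nbrs[of i'] i'_J by simp
  then show False using E3_no_isolated_edge[OF E3_b] by simp
qed

lemma no_new_isolated_edge_at_p:
  assumes new: "new_isolated_edge X p b" and X: "{s,i} \<subseteq> X" "X \<subseteq> {s,i,t}"
    and p_ne_i': "p \<noteq> i'" and t: "t \<in> X \<Longrightarrow> t \<notin> N b"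
  shows False
proof -
  have b: "b \<in> N p" "p \<in> N b" "b \<notin> X" "N p - X = {b}" "N b - X = {p}"
    using new by (auto simp: new_isolated_edge_def)
  have bJ: "b \<notin> J" using N_p_J b(1,3) X by auto
  have "s \<notin> N b" using s_in_N b(3) X new by (auto simp: new_isolated_edge_def)
  moreover have "i \<notin> N b"
  proof
    assume "i \<in> N b"
    then have "b = i'" using i_in_N bJ s_J t_J by auto
    then show False using b(2) N_i'_J p_J p_ne_i by auto
  qed
  ultimately have N_b: "N b = {p}" using b(2,5) X t by auto
  have "i \<notin> N p" using i_in_N p_ne_i' distinct by auto
  moreover have "t \<notin> N p" using N_p_J t_J s_ne_t by (metis IntI singletonD)
  ultimately have "N p - J = {b}" using b(1,4) bJ X s_J by auto
  moreover have "N b - J = {p}" using N_b p_J by auto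
  ultimately have "N b \<inter> J \<noteq> {}"
    using E2_edge_has_J_nbr[of b p] b(2) bJ p_J by (simp add: nbrs_def)
  then show False using N_b p_J by auto
qed

lemma new_isolated_si_at_t:
  assumes new: "new_isolated_edge {s,i} t b"
  shows "N t = {i,b} \<and> b \<notin> J \<and> b \<noteq> i \<and> ((b = i' \<and> N i' \<subseteq> {s,i,t}) \<or> N b = {t})"
proof -
  have b: "b \<in> N t" "t \<in> N b" "b \<notin> {s,i}" "N t - {s,i} = {b}" "N b - {s,i} = {t}"
    using new by (auto simp: new_isolated_edge_def)
  have N_t: "N t = {i,b}" using b(4) s_in_N i_in_N distinct t_J p_J by auto
  have bJ: "b \<notin> J"
  proof
    assume "b \<in> J"
    then obtain c where c: "c \<in> V - J" "t \<in> N c" "b \<in> N c" using E4_edge_witness[OF t_J] b(1)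
      by (metis nbrs_def mem_Collect_eq)
    then have "c = i" using N_t nbrs_sym \<open>b \<in> J\<close> by auto
    then show False using c(3) \<open>b \<in> J\<close> N_i_J b(3) b(1) not_in_own_nbrs by auto
  qed
  have "b = i' \<and> N i' \<subseteq> {s,i,t} \<or> N b = {t}"
  proof (cases "i \<in> N b")
    case True
    then show ?thesis using i_in_N bJ s_J t_J b(5) by auto
  next
    case False
    have "s \<notin> N b"
    proof
      assume "s \<in> N b"
      then have "b = p" using s_in_N b(3) by auto
      then show False using N_p_J b(2) t_J s_ne_t by auto
    qed
    then show ?thesis using b(5) False by auto
  qed
  then show ?thesis using N_t bJ b(3) by auto
qed

lemma t_tail_if_not_nice_avoiding_si:
  assumes "\<not> nice {e\<in>E. e \<inter> {s,i} = {}}"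
  obtains w where "N t = {i,w}" "w \<notin> J" "w \<noteq> i" "(w = i' \<and> N i' \<subseteq> {s,i,t}) \<or> N w = {t}"
proof -
  obtain a b where new: "new_isolated_edge {s,i} a b"
    using new_isolated_edge_if_not_nice[OF assms] .
  then have ab: "N a - {s,i} = {b}" "N b - {s,i} = {a}"
    by (auto simp: new_isolated_edge_def)
  consider "a = i'" | "a = p" "p \<noteq> i'" | "a = t" using new_isolated_si_cases[OF new] by blast
  then show thesis
  proof cases
    case 1
    show thesis
    proof (cases "b = t")
      case True
      have "N t - {s,i} = {i'}" "N i' - {s,i} = {t}" using ab 1 True by simp_all
      moreover have "i \<in> N t" "s \<notin> N t" using i_in_N s_in_N distinct(3,5) by auto
      ultimately have "N t = {i,i'}" "N i' \<subseteq> {s,i,t}" by blast+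
      then show thesis using i'_J distinct(4) by (intro that[of i']) auto
    next
      case False
      have "t \<notin> {s,i}" using s_ne_t distinct(3) by auto
      moreover have "N b - {s,i} = {i'}" "N i' - {s,i} = {b}" using ab 1 by simp_all
      ultimately have "t \<notin> N b" "t \<notin> N i'" using False distinct(6) by (metis DiffI singletonD)+
      have False
        by (rule no_new_isolated_edge_at_i'[of "{s,i}" b]) (use new 1 \<open>t \<notin> N b\<close> \<open>t \<notin> N i'\<close> in auto)
      then show thesis ..
    qed
  next
    case 2
    have False by (rule no_new_isolated_edge_at_p[of "{s,i}" b]) (use new 2 s_ne_t distinct(3) in auto)
    then show thesis ..
  next
    case 3
    then have "new_isolated_edge {s,i} t b" using new by simp
    from new_isolated_si_at_t[OF this] show thesis by (intro that[of b]) auto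
  qed
qed

end

locale t_tail = two_J_nbrs +
  fixes w :: nat
  assumes N_t: "N t = {i,w}" and w_J: "w \<notin> J" and w_ne_i: "w \<noteq> i"
    and w_cases: "(w = i' \<and> N i' \<subseteq> {s,i,t}) \<or> N w = {t}"
begin

lemma t_in_N: "t \<in> N u \<longleftrightarrow> u = i \<or> u = w" using N_t nbrs_sym by auto

lemma w_ne: "w \<noteq> s" "w \<noteq> t" using w_J s_J t_J by auto

lemma edges_meeting_sit: "{g\<in>E. g \<inter> {s,i,t} \<noteq> {}} = {{s,i}, {s,p}, {i,t}, {i,i'}, {t,w}}"
proof
  show "{g\<in>E. g \<inter> {s,i,t} \<noteq> {}} \<subseteq> {{s,i}, {s,p}, {i,t}, {i,i'}, {t,w}}"
  proof
    fix g assume g: "g \<in> {g\<in>E. g \<inter> {s,i,t} \<noteq> {}}"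
    then have "s \<in> g \<or> i \<in> g \<or> t \<in> g" by auto
    then show "g \<in> {{s,i}, {s,p}, {i,t}, {i,i'}, {t,w}}"
      by (elim disjE edge_containing[of g, rotated]) (use g N_s N_i N_t in \<open>auto simp: insert_commute\<close>)
  qed
  show "{{s,i}, {s,p}, {i,t}, {i,i'}, {t,w}} \<subseteq> {g\<in>E. g \<inter> {s,i,t} \<noteq> {}}"
    using N_s N_i N_t by (auto simp: nbrs_def insert_commute)
qed

lemma nice_avoiding_sit: "nice {e\<in>E. e \<inter> {s,i,t} = {}}"
proof (rule ccontr)
  assume "\<not> nice {e\<in>E. e \<inter> {s,i,t} = {}}"
  then obtain a b where new: "new_isolated_edge {s,i,t} a b"
    by (rule new_isolated_edge_if_not_nice)
  then have ab: "b \<in> N a" "a \<in> N b" "a \<notin> {s,i,t}" "b \<notin> {s,i,t}" "N a - {s,i,t} = {b}"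
    "N a \<inter> {s,i,t} \<noteq> {}"
    by (auto simp: new_isolated_edge_def)
  then have "a = i' \<or> a = p \<or> a = w" using s_in_N i_in_N t_in_N by auto
  then consider "a = i'" | "a = p" "a \<noteq> i'" | "a = w" "a \<noteq> i'" by blast
  then show False
  proof cases
    case 1
    have "w \<noteq> i'"
    proof
      assume "w = i'"
      then have "N i' \<subseteq> {s,i,t}" using w_cases i_in_N distinct by auto
      then show False using 1 ab(5) by auto
    qed
    then have "N w = {t}" using w_cases by simp
    then have "t \<notin> N b" "t \<notin> N i'" using t_in_N ab(1,2,4) 1 \<open>w \<noteq> i'\<close> distinct by auto
    then show False using no_new_isolated_edge_at_i'[of "{s,i,t}" b] new 1 by simp
  next
    case 2
    have "t \<notin> N b"
    proof
      assume "t \<in> N b"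
      then have "b = w" using t_in_N ab(4) by auto
      then show False using w_cases ab(2) 2 N_i'_J p_J p_ne_i t_J distinct by auto
    qed
    then show False using no_new_isolated_edge_at_p[of "{s,i,t}" b] new 2 by simp
  next
    case 3
    then show False using w_cases ab(5) by auto
  qed
qed

text \<open>The coefficient extends with \<open>{s,i}\<close> and \<open>{t,w}\<close> taking the variable
  of \<open>{i,t}\<close> and the other three deleted edges taking that of \<open>{s,i}\<close>: monomial \<open>x_{si}\<^sup>3 x_{it}\<^sup>2\<close>.\<close>

lemma alg_1_choosable_if_avoiding_sit:
  assumes choosable: "alg_1_choosable 5 {e\<in>E. e \<inter> {s,i,t} = {}}"
  shows "alg_1_choosable 5 E"
proof -
  define si where "si = {s,i}"
  define sp where "sp = {s,p}"
  define it where "it = {i,t}"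
  define ii' where "ii' = {i,i'}"
  define tw where "tw = {t,w}"
  define F where "F = {g\<in>E. g \<inter> {s,i,t} \<noteq> {}}"
  have EF: "E - F = {e\<in>E. e \<inter> {s,i,t} = {}}" by (auto simp: F_def)
  have F: "F = {si, sp, it, ii', tw}"
    unfolding F_def si_def sp_def it_def ii'_def tw_def by (rule edges_meeting_sit)
  have dist: "si \<noteq> sp" "si \<noteq> it" "si \<noteq> ii'" "si \<noteq> tw" "sp \<noteq> it" "sp \<noteq> ii'" "sp \<noteq> tw"
    "it \<noteq> ii'" "it \<noteq> tw" "ii' \<noteq> tw"
    unfolding si_def sp_def it_def ii'_def tw_def using distinct s_ne_t p_ne_i w_ne w_ne_i
    by (auto simp: doubleton_eq_iff)
  have meet: "it \<inter> si \<noteq> {}" "si \<inter> sp \<noteq> {}" "si \<inter> it \<noteq> {}" "si \<inter> ii' \<noteq> {}"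
    "it \<inter> tw \<noteq> {}" "si \<inter> tw = {}"
    unfolding si_def sp_def it_def ii'_def tw_def using distinct s_ne_t w_ne w_ne_i by auto
  have FE: "F \<subseteq> E" by (auto simp: F_def)
  define wt where "wt g = (if g \<in> E - F then 10 else if g = si then 0 else if g = it then 1 else 100::nat)"
    for g
  define h where "h g = (if g = si \<or> g = tw then it else si)" for g
  define K where "K g = (if g = si then 3 else if g = it then 2 else 0::nat)" for g
  show "alg_1_choosable 5 E"
  proof (rule alg_1_choosable_extend[OF finite_E doubletons_E FE choosable[folded EF], of wt 10 h K])
    show "\<forall>g\<in>E - F. wt g = 10" by (simp add: wt_def)
    show "\<forall>e\<in>E - F. \<forall>g\<in>F. g \<inter> e \<noteq> {} \<longrightarrow> 10 < wt g"
    proof (intro ballI impI)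
      fix e g assume "e \<in> E - F" "g \<in> F" "g \<inter> e \<noteq> {}"
      then have "g \<noteq> si" "g \<noteq> it" using EF si_def it_def by auto
      then show "10 < wt g" using \<open>g \<in> F\<close> by (auto simp: wt_def)
    qed
    have "si \<in> E" "it \<in> E" using F FE by auto
    then show "\<forall>f\<in>F. h f \<in> E \<and> h f \<inter> f \<noteq> {} \<and> h f \<noteq> f"
      unfolding F by (auto simp: h_def dist dist[symmetric] meet)
    show "\<forall>f\<in>F. \<forall>g\<in>E. g \<inter> f \<noteq> {} \<longrightarrow> g \<noteq> f \<longrightarrow> g \<noteq> h f \<longrightarrow> wt (h f) < wt g"
    proof (intro ballI impI)
      fix f g assume f: "f \<in> F" and g: "g \<in> E" "g \<inter> f \<noteq> {}" "g \<noteq> f" "g \<noteq> h f"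
      show "wt (h f) < wt g"
      proof (cases "f = si \<or> f = tw")
        case True
        have "g \<noteq> si" using True g(2,3) meet(6) by auto
        moreover have "g \<noteq> it" using True g(4) by (simp add: h_def)
        ultimately show ?thesis using True F dist by (auto simp: h_def wt_def)
      next
        case False
        then show ?thesis using g(4) F by (auto simp: h_def wt_def)
      qed
    qed
    show "(\<Sum>f\<in>F. Poly_Mapping.single f (K f)) = (\<Sum>f\<in>F. Poly_Mapping.single (h f) 1)"
      unfolding F using dist by (simp add: K_def h_def single_numeral_eq_sum add_ac)
    show "\<forall>f\<in>F. K f \<le> 5 - 1" by (simp add: K_def)
    show "(\<Sum>f\<in>F. K f) = card F" unfolding F using dist by (simp add: K_def)
  qed
qed

lemma not_nice_avoiding_sit: "\<not> nice {e\<in>E. e \<inter> {s,i,t} = {}}"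
  using alg_1_choosable_if_avoiding_sit alg_1_choosable_delete_vertices[of "{s,i,t}"] not_choosable s_V i_V t_V
  by auto

end


context two_J_nbrs begin

lemma impossible: False
proof -
  obtain w where "N t = {i,w}" "w \<notin> J" "w \<noteq> i" "(w = i' \<and> N i' \<subseteq> {s,i,t}) \<or> N w = {t}"
    using t_tail_if_not_nice_avoiding_si[OF not_nice_avoiding_si] .
  then interpret t_tail n E J i i' s p t w by unfold_locales
  show False using nice_avoiding_sit not_nice_avoiding_sit by simp
qed

end

theorem lemma5p4:
  fixes n :: nat and E :: "nat set set" and J :: "nat set" and i i' :: nat
  assumes "simple_graph n E"
    and "nice E"
    and "\<not> alg_1_choosable 5 E"
    and "\<forall>m < n. \<forall>E'. simple_graph m E' \<and> nice E' \<longrightarrow> alg_1_choosable 5 E'"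
    and "good_subset {1..n} E J"
    and "\<forall>J'. good_subset {1..n} E J' \<longrightarrow> card J \<le> card J'"
    and "{i, i'} \<in> E2 E J"
    and "deg (E3 E J) i \<ge> 2"
  shows "card {j \<in> J. {i, j} \<in> E \<and> \<not> special_nbr {1..n} E J j i} \<ge> 2"
proof (rule ccontr)
  assume few: "\<not> ?thesis"
  interpret min_counterexample n E J i i' using assms(1-7) by unfold_locales
  have two: "card (N i \<inter> J) \<ge> 2" using assms(8) deg_E3_eq_card_J_nbrs by simp
  obtain s where "special_nbr V E J s i" using special_J_nbr_exists[OF two] few by auto
  then obtain p where "s \<in> J" "p \<notin> J" "p \<noteq> i" "N s = {i,p}" "N p \<inter> J = {s}"
    by (rule special_nbrE)
  then interpret special_nbr_setting n E J i i' s p by unfold_locales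
  obtain t where "t \<in> J" "s \<noteq> t" "N i \<inter> J = {s,t}" using other_J_nbr[OF two] .
  then interpret two_J_nbrs n E J i i' s p t by unfold_locales
  show False by (rule impossible)
qed

end
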